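(* Let $n\ge1$ and let $A,B\in M_n(\mathbb C)$ be unitary. Then $|T(A,B)|\le n^{n^2/2}$, with equality if and only if $A$ and $B$ have no multiple eigenvalues, $A^n$ and $B^n$ are scalar matrices, and the orthonormal eigenbases of $A$ and of $B$ are mutually unbiased.
   Context: $M(A,B)\in M_{n^2}(\mathbb C)$ is the block matrix of $n\times n$ blocks whose $(i,j)$-th block is $A^{j-1}B^{i-1}$ ($i,j=1,\dots,n$), and $T(A,B)=\det M(A,B)$. Two orthonormal bases $u_1,\dots,u_n$ and $v_1,\dots,v_n$ of $\mathbb C^n$ are mutually unbiased if $|u_s^*v_t|^2=1/n$ for all $s,t$. (When $A$ has no multiple eigenvalues, its orthonormal eigenbasis is unique up to phases of the vectors, so mutual unbiasedness is well defined.) *)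

theory Defs
  imports "Jordan_Normal_Form.Schur_Decomposition"
begin

definition unitary_mat :: "nat \<Rightarrow> complex mat \<Rightarrow> bool" where
  "unitary_mat n U \<longleftrightarrow> U \<in> carrier_mat n n \<and>
     U * mat_adjoint U = 1\<^sub>m n \<and> mat_adjoint U * U = 1\<^sub>m n"

text \<open>The block matrix M(A,B) of size n^2: with 0-based block indices i (row) and j (column),
  block (i,j) is A^j B^i, i.e. A^(j-1) B^(i-1) in 1-based indexing.\<close>
definition Mblock :: "nat \<Rightarrow> complex mat \<Rightarrow> complex mat \<Rightarrow> complex mat" where
  "Mblock n A B = mat (n*n) (n*n)
     (\<lambda>(r, c). (A ^\<^sub>m (c div n) * B ^\<^sub>m (r div n)) $$ (r mod n, c mod n))"

definition Tdet :: "nat \<Rightarrow> complex mat \<Rightarrow> complex mat \<Rightarrow> complex" where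
  "Tdet n A B = det (Mblock n A B)"

definition cinner :: "nat \<Rightarrow> complex vec \<Rightarrow> complex vec \<Rightarrow> complex" where
  "cinner n u v = (\<Sum>k<n. cnj (u $ k) * v $ k)"

definition orthonormal_basis :: "nat \<Rightarrow> complex vec list \<Rightarrow> bool" where
  "orthonormal_basis n us \<longleftrightarrow> length us = n \<and> (\<forall>s<n. us ! s \<in> carrier_vec n) \<and>
     (\<forall>s<n. \<forall>t<n. cinner n (us ! s) (us ! t) = (if s = t then 1 else 0))"

definition mutually_unbiased :: "nat \<Rightarrow> complex vec list \<Rightarrow> complex vec list \<Rightarrow> bool" where
  "mutually_unbiased n us vs \<longleftrightarrow> orthonormal_basis n us \<and> orthonormal_basis n vs \<and>
     (\<forall>s<n. \<forall>t<n. (cmod (cinner n (us ! s) (vs ! t)))\<^sup>2 = 1 / real n)"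

definition orthonormal_eigenbasis :: "nat \<Rightarrow> complex mat \<Rightarrow> complex vec list \<Rightarrow> bool" where
  "orthonormal_eigenbasis n A us \<longleftrightarrow> orthonormal_basis n us \<and>
     (\<forall>s<n. \<exists>e. eigenvector A (us ! s) e)"

definition simple_spectrum :: "complex mat \<Rightarrow> bool" where
  "simple_spectrum A \<longleftrightarrow> (\<forall>e. order e (char_poly A) \<le> 1)"

definition scalar_mat :: "nat \<Rightarrow> complex mat \<Rightarrow> bool" where
  "scalar_mat n X \<longleftrightarrow> (\<exists>c. X = c \<cdot>\<^sub>m 1\<^sub>m n)"

end

theory Submission
  imports Defs "Jordan_Normal_Form.Spectral_Radius"
begin

text \<open>
  Let G = M(A,B)^* M(A,B). Each column of M(A,B) stacks one column of each of the n unitary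
  matrices A^j B^i (i < n), so every diagonal entry of G equals n, and Hadamard's inequality
  |det M|^2 <= prod_c G_cc (spectral theorem plus AM-GM) gives the bound, with equality iff G = n I.

  Diagonalise A = U diag(a) U^*, B = V diag(b) V^* and put W = U^* V. After conjugation by V,
  the (j', j) block of G has (s, t) entry
    (sum_k conj(W_ks) W_kt conj(a_k)^j' a_k^j) * (sum_{i<n} (conj(b_s) b_t)^i).
  Vandermonde arguments show that these entries equal n delta_jj' delta_st exactly when the a_k,
  and likewise the b_s, are n distinct n-th roots of one number and |W_ks|^2 = 1/n.
\<close>

section \<open>Adjoints and diagonal matrices\<close>

abbreviation adj :: "complex mat \<Rightarrow> complex mat" where "adj \<equiv> mat_adjoint"

lemma adj_carrier[simp]: "A \<in> carrier_mat r c \<Longrightarrow> adj A \<in> carrier_mat c r"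
  unfolding mat_adjoint_def by (auto simp: mat_of_rows_def)

lemma adj_dims[simp]: "dim_row (adj A) = dim_col A" "dim_col (adj A) = dim_row A"
  unfolding mat_adjoint_def by (auto simp: mat_of_rows_def)

lemma adj_index[simp]: "i < dim_col A \<Longrightarrow> j < dim_row A \<Longrightarrow> adj A $$ (i,j) = cnj (A $$ (j,i))"
  unfolding mat_adjoint_def by (auto simp: mat_of_rows_def)

lemma adj_adj[simp]: "adj (adj A) = A"
  by (rule eq_matI) auto

lemma adj_mult:
  assumes "A \<in> carrier_mat r k" "B \<in> carrier_mat k c"
  shows "adj (A * B) = adj B * adj A"
  using assms by (intro eq_matI) (auto simp: scalar_prod_def cnj_sum intro!: sum.cong)

lemma det_adj:
  assumes "A \<in> carrier_mat n n"
  shows "det (adj A) = cnj (det A)"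
proof -
  interpret h: comm_ring_hom cnj by unfold_locales auto
  have "adj A = transpose_mat (map_mat cnj A)" using assms by (intro eq_matI) auto
  then have "det (adj A) = det (map_mat cnj A)" using assms by (simp add: det_transpose[of _ n])
  then show ?thesis by simp
qed

lemma mult_index_sum:
  assumes "X \<in> carrier_mat r n" "Y \<in> carrier_mat n c" "i < r" "j < c"
  shows "(X * Y) $$ (i,j) = (\<Sum>k<n. X $$ (i,k) * Y $$ (k,j))"
  using assms by (simp add: scalar_prod_def lessThan_atLeast0)

lemma adj_mult_index:
  assumes "U \<in> carrier_mat r n" "V \<in> carrier_mat r m" "i < n" "j < m"
  shows "(adj U * V) $$ (i,j) = (\<Sum>k<r. cnj (U $$ (k,i)) * V $$ (k,j))"
  using assms by (simp add: scalar_prod_def lessThan_atLeast0)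

lemma mult_adj_index:
  assumes "X \<in> carrier_mat r n" "Y \<in> carrier_mat c n" "i < r" "j < c"
  shows "(X * adj Y) $$ (i,j) = (\<Sum>k<n. X $$ (i,k) * cnj (Y $$ (j,k)))"
  using assms by (simp add: scalar_prod_def lessThan_atLeast0)

lemma cnj_mult_self: "cnj z * z = complex_of_real ((cmod z)\<^sup>2)"
  by (metis complex_norm_square mult.commute)

lemma sum_cnj_mult_self_eq_0:
  fixes f :: "nat \<Rightarrow> complex"
  assumes "(\<Sum>k\<in>S. f k * cnj (f k)) = 0" "finite S" "k \<in> S"
  shows "f k = 0"
proof -
  have "(\<Sum>k\<in>S. f k * cnj (f k)) = complex_of_real (\<Sum>k\<in>S. (cmod (f k))\<^sup>2)"
    unfolding of_real_sum by (intro sum.cong refl) (metis complex_norm_square)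
  then have "(\<Sum>k\<in>S. (cmod (f k))\<^sup>2) = 0" using assms(1) by (metis of_real_eq_0_iff)
  then have "(cmod (f k))\<^sup>2 = 0" using assms(2,3) sum_nonneg_eq_0_iff[of S "\<lambda>k. (cmod (f k))\<^sup>2"] by auto
  then show ?thesis by simp
qed

definition diag_matrix :: "nat \<Rightarrow> (nat \<Rightarrow> complex) \<Rightarrow> complex mat" where
  "diag_matrix n d = mat n n (\<lambda>(i,j). if i = j then d i else 0)"

lemma diag_matrix_carrier[simp]: "diag_matrix n d \<in> carrier_mat n n"
  and diag_matrix_dims[simp]: "dim_row (diag_matrix n d) = n" "dim_col (diag_matrix n d) = n"
  unfolding diag_matrix_def by auto

lemma diag_matrix_index[simp]:
  "i < n \<Longrightarrow> j < n \<Longrightarrow> diag_matrix n d $$ (i,j) = (if i = j then d i else 0)"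
  unfolding diag_matrix_def by auto

lemma diag_matrix_eq_iff: "diag_matrix n d = diag_matrix n e \<longleftrightarrow> (\<forall>k<n. d k = e k)"
  by (metis diag_matrix_index eq_matI diag_matrix_dims)

lemma mult_diag_matrix_index:
  assumes "U \<in> carrier_mat r n" "i < r" "j < n"
  shows "(U * diag_matrix n d) $$ (i,j) = U $$ (i,j) * d j"
proof -
  have "(U * diag_matrix n d) $$ (i,j) = (\<Sum>k<n. if k = j then U $$ (i,k) * d k else 0)"
    unfolding mult_index_sum[OF assms(1) diag_matrix_carrier assms(2,3)]
    by (rule sum.cong) (use assms in auto)
  then show ?thesis using assms by simp
qed

lemma diag_matrix_mult_index:
  assumes "X \<in> carrier_mat n m" "s < n" "t < m"
  shows "(diag_matrix n p * X) $$ (s,t) = p s * X $$ (s,t)"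
proof -
  have "(diag_matrix n p * X) $$ (s,t) = (\<Sum>k<n. if s = k then p s * X $$ (k,t) else 0)"
    unfolding mult_index_sum[OF diag_matrix_carrier assms] by (rule sum.cong) (use assms in auto)
  then show ?thesis using assms by simp
qed

lemma diag_matrix_mult: "diag_matrix n d * diag_matrix n e = diag_matrix n (\<lambda>i. d i * e i)"
  by (rule eq_matI) (simp_all add: diag_matrix_mult_index[OF diag_matrix_carrier] del: index_mult_mat(1))

lemma diag_matrix_mult_assoc:
  "X \<in> carrier_mat n k \<Longrightarrow> diag_matrix n d * (diag_matrix n e * X) = diag_matrix n (\<lambda>i. d i * e i) * X"
  by (simp add: assoc_mult_mat[symmetric, of _ n n _ n _ k] diag_matrix_mult)

lemma adj_diag_matrix: "adj (diag_matrix n d) = diag_matrix n (\<lambda>i. cnj (d i))"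
  by (rule eq_matI) auto

lemma diag_matrix_const: "diag_matrix n (\<lambda>_. c) = c \<cdot>\<^sub>m 1\<^sub>m n"
  by (rule eq_matI) auto

lemma diag_matrix_one: "diag_matrix n (\<lambda>_. 1) = 1\<^sub>m n"
  by (rule eq_matI) auto

lemma det_diag_matrix: "det (diag_matrix n d) = (\<Prod>i<n. d i)"
proof -
  have "det (diag_matrix n d) = prod_list (diag_mat (diag_matrix n d))"
    by (rule det_upper_triangular) (auto simp: upper_triangular_def)
  also have "diag_mat (diag_matrix n d) = map d [0..<n]"
    by (auto simp: diag_mat_def intro!: nth_equalityI)
  finally show ?thesis by (simp add: prod.distinct_set_conv_list[symmetric] atLeast0LessThan)
qed

lemma conj_diag_matrix_index:
  assumes "U \<in> carrier_mat n n" "i < n" "j < n"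
  shows "(U * diag_matrix n d * adj U) $$ (i,j) = (\<Sum>k<n. U $$ (i,k) * d k * cnj (U $$ (j,k)))"
  by (subst mult_adj_index[of _ n n]) (use assms in \<open>auto simp: mult_diag_matrix_index simp del: index_mult_mat(1)\<close>)

section \<open>Unitary matrices\<close>

lemma unitary_carrier: "unitary_mat n U \<Longrightarrow> U \<in> carrier_mat n n"
  unfolding unitary_mat_def by auto

lemma unitary_adj_mult_self: "unitary_mat n U \<Longrightarrow> adj U * U = 1\<^sub>m n"
  and unitary_mult_adj_self: "unitary_mat n U \<Longrightarrow> U * adj U = 1\<^sub>m n"
  unfolding unitary_mat_def by auto

lemma unitary_matI:
  assumes "U \<in> carrier_mat n n" "adj U * U = 1\<^sub>m n"
  shows "unitary_mat n U"
  using assms mat_mult_left_right_inverse[of "adj U" n U] unfolding unitary_mat_def by auto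

lemma unitary_adj: "unitary_mat n U \<Longrightarrow> unitary_mat n (adj U)"
  unfolding unitary_mat_def by auto

lemma unitary_cancel_left:
  assumes "unitary_mat n W" "X \<in> carrier_mat n k"
  shows "adj W * (W * X) = X"
proof -
  have W: "W \<in> carrier_mat n n" using assms(1) by (rule unitary_carrier)
  have "adj W * (W * X) = (adj W * W) * X" using W assms(2) by (simp add: assoc_mult_mat[of _ n n _ n _ k])
  then show ?thesis using assms by (simp add: unitary_adj_mult_self)
qed

lemma unitary_cancel_left':
  assumes "unitary_mat n W" "X \<in> carrier_mat n k"
  shows "W * (adj W * X) = X"
  using unitary_cancel_left[OF unitary_adj[OF assms(1)] assms(2)] by simp

lemma unitary_mult:
  assumes "unitary_mat n U" "unitary_mat n V"
  shows "unitary_mat n (U * V)"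
proof -
  have c: "U \<in> carrier_mat n n" "V \<in> carrier_mat n n" using assms by (auto simp: unitary_carrier)
  have "adj (U * V) * (U * V) = adj V * (adj U * (U * V))"
    using c by (simp add: adj_mult[of _ n n] assoc_mult_mat[of _ n n _ n _ n])
  also have "\<dots> = 1\<^sub>m n" using assms c by (simp add: unitary_cancel_left unitary_adj_mult_self)
  finally show ?thesis using c by (intro unitary_matI) auto
qed

lemma unitary_pow: "unitary_mat n A \<Longrightarrow> unitary_mat n (A ^\<^sub>m j)"
proof (induction j)
  case 0
  then show ?case by (auto simp: unitary_mat_def)
next
  case (Suc j)
  then show ?case by (simp add: unitary_mult)
qed

lemma unitary_det: "unitary_mat n U \<Longrightarrow> det (adj U) * det U = 1"
  by (metis adj_carrier det_mult det_one unitary_adj_mult_self unitary_carrier)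

lemma unitary_conj_cancel:
  assumes "unitary_mat n U" "X \<in> carrier_mat n n"
  shows "adj U * (U * X * adj U) * U = X"
proof -
  have U: "U \<in> carrier_mat n n" using assms(1) by (rule unitary_carrier)
  have "adj U * (U * X * adj U) * U = adj U * (U * (X * (adj U * U)))"
    using U assms(2) by (simp add: assoc_mult_mat[of _ n n _ n _ n])
  then show ?thesis using assms by (simp add: unitary_cancel_left unitary_adj_mult_self)
qed

lemma unitary_conj_scalar:
  assumes "unitary_mat n V"
  shows "V * diag_matrix n (\<lambda>_. x) * adj V = diag_matrix n (\<lambda>_. x)"
proof -
  have V: "V \<in> carrier_mat n n" using assms by (rule unitary_carrier)
  have "V * (x \<cdot>\<^sub>m 1\<^sub>m n) * adj V = x \<cdot>\<^sub>m (V * adj V)"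
    using V by (simp add: mult_smult_distrib[of _ n n _ n] mult_smult_assoc_mat[of _ n n _ n])
  then show ?thesis using assms by (simp add: diag_matrix_const unitary_mult_adj_self)
qed

lemma adj_unitary_conj:
  assumes "U \<in> carrier_mat n n"
  shows "adj (U * diag_matrix n d * adj U) = U * diag_matrix n (\<lambda>k. cnj (d k)) * adj U"
proof -
  have "adj (U * diag_matrix n d * adj U) = adj (adj U) * adj (U * diag_matrix n d)"
    using assms by (intro adj_mult[of _ n n]) auto
  also have "adj (U * diag_matrix n d) = adj (diag_matrix n d) * adj U"
    using assms by (intro adj_mult) auto
  finally show ?thesis using assms by (simp add: adj_diag_matrix assoc_mult_mat[of _ n n _ n _ n])
qed

lemma unitary_conj_power:
  assumes U: "unitary_mat n U"
  shows "(U * diag_matrix n d * adj U) ^\<^sub>m j = U * diag_matrix n (\<lambda>k. d k ^ j) * adj U"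
proof (induction j)
  case 0
  show ?case using U unitary_carrier[OF U] by (simp add: diag_matrix_one unitary_mult_adj_self)
next
  case (Suc j)
  have Uc: "U \<in> carrier_mat n n" using U by (rule unitary_carrier)
  have "(U * diag_matrix n d * adj U) ^\<^sub>m Suc j
      = U * diag_matrix n (\<lambda>k. d k ^ j) * adj U * (U * diag_matrix n d * adj U)"
    using Suc by simp
  also have "\<dots> = U * (diag_matrix n (\<lambda>k. d k ^ j) * (adj U * (U * (diag_matrix n d * adj U))))"
    using Uc by (simp add: assoc_mult_mat[of _ n n _ n _ n] mult_carrier_mat[of _ n n _ n])
  also have "\<dots> = U * (diag_matrix n (\<lambda>k. d k ^ Suc j) * adj U)"
    using Uc unitary_cancel_left[OF U mult_carrier_mat[OF diag_matrix_carrier adj_carrier[OF Uc]]]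
    by (simp add: diag_matrix_mult_assoc[OF adj_carrier[OF Uc]] mult.commute)
  finally show ?case using Uc by (simp add: assoc_mult_mat[of _ n n _ n _ n])
qed

section \<open>The spectral theorem for normal matrices\<close>

lemma unitary_normalize_columns:
  assumes W: "W \<in> carrier_mat n n" and orth: "corthogonal_mat W"
  shows "\<exists>s. unitary_mat n (W * diag_matrix n s)"
proof -
  let ?G = "adj W * W"
  have off: "?G $$ (i,j) = 0" if "i < n" "j < n" "i \<noteq> j" for i j
    using orth that W unfolding corthogonal_mat_def Let_def diagonal_mat_def by auto
  define r where "r i = (\<Sum>k<n. (cmod (W $$ (k,i)))\<^sup>2)" for i
  have diag: "?G $$ (i,i) = complex_of_real (r i)" if "i < n" for i
    using that by (simp add: adj_mult_index[OF W W] r_def of_real_sum cnj_mult_self del: index_mult_mat(1))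
  have r_pos: "r i > 0" if "i < n" for i
  proof -
    have "r i \<noteq> 0" using orth that W diag unfolding corthogonal_mat_def Let_def by auto
    moreover have "r i \<ge> 0" unfolding r_def by (intro sum_nonneg) auto
    ultimately show ?thesis by simp
  qed
  define s where "s i = complex_of_real (1 / sqrt (r i))" for i
  have "adj (W * diag_matrix n s) * (W * diag_matrix n s)
      = diag_matrix n (\<lambda>i. cnj (s i)) * ?G * diag_matrix n s"
    using W by (simp add: adj_mult[OF W diag_matrix_carrier] adj_diag_matrix
        assoc_mult_mat[of _ n n _ n _ n] mult_carrier_mat[of _ n n _ n])
  also have "\<dots> = 1\<^sub>m n"
  proof (rule eq_matI)
    fix i j assume "i < dim_row (1\<^sub>m n)" "j < dim_col (1\<^sub>m n)"
    then have ij: "i < n" "j < n" by auto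
    have "(diag_matrix n (\<lambda>i. cnj (s i)) * ?G * diag_matrix n s) $$ (i,j)
        = (diag_matrix n (\<lambda>i. cnj (s i)) * ?G) $$ (i,j) * s j"
      by (rule mult_diag_matrix_index) (use W ij in auto)
    also have "\<dots> = cnj (s i) * ?G $$ (i,j) * s j"
      by (subst diag_matrix_mult_index) (use W ij in auto)
    also have "\<dots> = 1\<^sub>m n $$ (i,j)"
    proof (cases "i = j")
      case True
      have "cnj (s i) * ?G $$ (i,i) * s i = complex_of_real (1 / sqrt (r i) * r i * (1 / sqrt (r i)))"
        using ij by (simp only: s_def diag complex_cnj_complex_of_real of_real_mult)
      also have "\<dots> = 1" using r_pos[OF ij(1)] by (simp add: field_simps)
      finally show ?thesis using True ij by simp
    qed (use ij off in auto)
    finally show "(diag_matrix n (\<lambda>i. cnj (s i)) * ?G * diag_matrix n s) $$ (i,j) = 1\<^sub>m n $$ (i,j)" .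
  qed (use W in auto)
  finally show ?thesis using W by (intro exI[of _ s] unitary_matI) auto
qed

lemma unitary_with_first_col:
  assumes v: "v \<in> carrier_vec n" "v \<noteq> 0\<^sub>v n"
  shows "\<exists>W s. unitary_mat n W \<and> (\<forall>i<n. W $$ (i,0) = s * v $ i)"
proof -
  interpret cof_vec_space n "TYPE(complex)" .
  define ws where "ws = gram_schmidt n (basis_completion v)"
  note b = basis_completion[OF v]
  from gram_schmidt_result[OF b(2,4,5) ws_def] b(6)
  have ws: "set ws \<subseteq> carrier_vec n" "corthogonal ws" "length ws = n" by auto
  have "n \<noteq> 0" using v by auto
  moreover have "hd ws = v"
    using v unfolding ws_def basis_completion_def Let_def by simp
  ultimately have ws0: "ws ! 0 = v" using ws(3) by (cases ws) auto
  define W where "W = mat_of_cols n ws"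
  have W: "W \<in> carrier_mat n n" unfolding W_def using mat_of_cols_carrier(1)[of n ws] ws(3) by simp
  obtain s where "unitary_mat n (W * diag_matrix n s)"
    using unitary_normalize_columns[OF W] orthogonal_mat_of_cols[OF ws, folded W_def] by blast
  moreover have "(W * diag_matrix n s) $$ (i,0) = s 0 * v $ i" if "i < n" for i
  proof -
    have "(W * diag_matrix n s) $$ (i,0) = W $$ (i,0) * s 0"
      using that \<open>n \<noteq> 0\<close> by (intro mult_diag_matrix_index[OF W]) auto
    then show ?thesis using that \<open>n \<noteq> 0\<close> ws ws0 by (simp add: W_def mat_of_cols_index)
  qed
  ultimately show ?thesis by blast
qed

definition diag_block :: "complex \<Rightarrow> complex mat \<Rightarrow> complex mat" where
  "diag_block c X = mat (Suc (dim_row X)) (Suc (dim_col X))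
     (\<lambda>(i,j). if i = 0 \<and> j = 0 then c else if i = 0 \<or> j = 0 then 0 else X $$ (i - 1, j - 1))"

lemma diag_block_dims[simp]:
  "dim_row (diag_block c X) = Suc (dim_row X)" "dim_col (diag_block c X) = Suc (dim_col X)"
  unfolding diag_block_def by auto

lemma diag_block_carrier: "X \<in> carrier_mat r k \<Longrightarrow> diag_block c X \<in> carrier_mat (Suc r) (Suc k)"
  by auto

lemma diag_block_index[simp]:
  "diag_block c X $$ (0,0) = c"
  "j < dim_col X \<Longrightarrow> diag_block c X $$ (0, Suc j) = 0"
  "i < dim_row X \<Longrightarrow> diag_block c X $$ (Suc i, 0) = 0"
  "i < dim_row X \<Longrightarrow> j < dim_col X \<Longrightarrow> diag_block c X $$ (Suc i, Suc j) = X $$ (i,j)"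
  unfolding diag_block_def by auto

lemma diag_block_mult:
  assumes "X \<in> carrier_mat r k" "Y \<in> carrier_mat k c"
  shows "diag_block a X * diag_block b Y = diag_block (a * b) (X * Y)"
proof (rule eq_matI)
  fix i j assume "i < dim_row (diag_block (a * b) (X * Y))" "j < dim_col (diag_block (a * b) (X * Y))"
  then have ij: "i < Suc r" "j < Suc c" using assms by auto
  have "(diag_block a X * diag_block b Y) $$ (i,j)
      = (\<Sum>l<Suc k. diag_block a X $$ (i,l) * diag_block b Y $$ (l,j))"
    using assms ij by (intro mult_index_sum) (auto intro!: diag_block_carrier)
  also have "\<dots> = diag_block a X $$ (i,0) * diag_block b Y $$ (0,j)
      + (\<Sum>l<k. diag_block a X $$ (i, Suc l) * diag_block b Y $$ (Suc l, j))"
    by (simp add: sum.lessThan_Suc_shift del: sum.lessThan_Suc)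
  also have "\<dots> = diag_block (a * b) (X * Y) $$ (i,j)"
    using ij assms
    by (cases i; cases j) (auto simp: mult_index_sum[OF assms] simp del: index_mult_mat(1))
  finally show "(diag_block a X * diag_block b Y) $$ (i,j) = diag_block (a * b) (X * Y) $$ (i,j)" .
qed (use assms in auto)

lemma adj_diag_block: "adj (diag_block c X) = diag_block (cnj c) (adj X)"
  by (rule eq_matI) (auto simp: diag_block_def)

lemma diag_block_one: "diag_block 1 (1\<^sub>m m) = 1\<^sub>m (Suc m)"
  by (rule eq_matI) (auto simp: diag_block_def)

lemma diag_block_diag_matrix:
  "diag_block e (diag_matrix m d) = diag_matrix (Suc m) (\<lambda>i. if i = 0 then e else d (i - 1))"
  by (rule eq_matI) (auto simp: diag_block_def)

lemma diag_block_inject: "diag_block a X = diag_block b Y \<Longrightarrow> X = Y"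
  by (rule eq_matI) (metis diag_block_dims diag_block_index(4) Suc_inject)+

lemma diag_block_of_first_col_row:
  assumes "C \<in> carrier_mat (Suc m) (Suc m)"
    and "\<And>i. i < Suc m \<Longrightarrow> C $$ (i,0) = (if i = 0 then e else 0)"
    and "\<And>j. j < m \<Longrightarrow> C $$ (0, Suc j) = 0"
  shows "C = diag_block e (mat m m (\<lambda>(i,j). C $$ (Suc i, Suc j)))"
proof (rule eq_matI)
  fix i j assume "i < dim_row (diag_block e (mat m m (\<lambda>(i,j). C $$ (Suc i, Suc j))))"
    "j < dim_col (diag_block e (mat m m (\<lambda>(i,j). C $$ (Suc i, Suc j))))"
  then show "C $$ (i,j) = diag_block e (mat m m (\<lambda>(i,j). C $$ (Suc i, Suc j))) $$ (i,j)"
    using assms by (cases i; cases j) auto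
qed (use assms in auto)

lemma unitary_diag_block:
  assumes "unitary_mat m U"
  shows "unitary_mat (Suc m) (diag_block 1 U)"
proof (rule unitary_matI)
  have U: "U \<in> carrier_mat m m" using assms by (rule unitary_carrier)
  then show "diag_block 1 U \<in> carrier_mat (Suc m) (Suc m)" by (rule diag_block_carrier)
  have "adj (diag_block 1 U) * diag_block 1 U = diag_block 1 (adj U * U)"
    using U by (simp add: adj_diag_block diag_block_mult[of _ m m _ m])
  then show "adj (diag_block 1 U) * diag_block 1 U = 1\<^sub>m (Suc m)"
    using assms by (simp add: unitary_adj_mult_self diag_block_one)
qed

lemma normal_unitary_conj:
  assumes A: "A \<in> carrier_mat n n" "A * adj A = adj A * A" and W: "unitary_mat n W"
  defines "C \<equiv> adj W * (A * W)"
  shows "C * adj C = adj C * C"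
proof -
  have Wc: "W \<in> carrier_mat n n" using W by (rule unitary_carrier)
  note assoc = assoc_mult_mat[of _ n n _ n _ n] mult_carrier_mat[of _ n n _ n]
  have adjC: "adj C = adj W * (adj A * W)"
  proof -
    have "adj C = adj (A * W) * adj (adj W)" unfolding C_def using A Wc by (intro adj_mult) auto
    also have "adj (A * W) = adj W * adj A" using A Wc by (intro adj_mult)
    finally show ?thesis using A Wc by (simp add: assoc)
  qed
  have "C * adj C = adj W * (A * (W * (adj W * (adj A * W))))"
    unfolding adjC unfolding C_def using A Wc by (simp add: assoc)
  also have "W * (adj W * (adj A * W)) = adj A * W"
    using A Wc by (intro unitary_cancel_left'[OF W]) auto
  also have "A * (adj A * W) = adj A * (A * W)"
    using A Wc by (simp add: assoc flip: assoc_mult_mat[of A n n "adj A" n W n])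
  also have "\<dots> = adj A * (W * (adj W * (A * W)))"
    using A Wc unitary_cancel_left'[OF W, of "A * W" n] by simp
  also have "adj W * \<dots> = adj C * C"
    unfolding adjC unfolding C_def using A Wc by (simp add: assoc)
  finally show ?thesis .
qed

lemma normal_first_col_imp_first_row:
  assumes C: "C \<in> carrier_mat (Suc m) (Suc m)" "C * adj C = adj C * C"
    and col: "\<And>i. i < Suc m \<Longrightarrow> C $$ (i,0) = (if i = 0 then e else 0)"
    and j: "j < m"
  shows "C $$ (0, Suc j) = 0"
proof -
  \<comment> \<open>the (0,0) entries of \<open>C C\<^sup>*\<close> and \<open>C\<^sup>* C\<close> are the squared norms of row 0 and column 0\<close>
  have "(C * adj C) $$ (0,0) = e * cnj e + (\<Sum>k<m. C $$ (0, Suc k) * cnj (C $$ (0, Suc k)))"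
    using C(1) col[of 0] by (simp add: mult_adj_index[OF C(1) C(1)] sum.lessThan_Suc_shift del: sum.lessThan_Suc index_mult_mat(1))
  moreover have "(adj C * C) $$ (0,0) = cnj e * e"
    using C(1) col by (simp add: adj_mult_index[OF C(1) C(1)] sum.lessThan_Suc_shift del: sum.lessThan_Suc index_mult_mat(1))
  ultimately have "(\<Sum>k<m. C $$ (0, Suc k) * cnj (C $$ (0, Suc k))) = 0" using C(2) by simp
  from sum_cnj_mult_self_eq_0[OF this] j show ?thesis by auto
qed

lemma unitary_conj_eigenvector_first_col:
  assumes A: "A \<in> carrier_mat n n" and v: "v \<in> carrier_vec n" and Av: "A *\<^sub>v v = e \<cdot>\<^sub>v v"
    and W: "unitary_mat n W" and W0: "\<And>i. i < n \<Longrightarrow> W $$ (i,0) = s * v $ i" and i: "i < n"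
  shows "(adj W * (A * W)) $$ (i,0) = (if i = 0 then e else 0)"
proof -
  have Wc: "W \<in> carrier_mat n n" using W by (rule unitary_carrier)
  have AW0: "(A * W) $$ (k,0) = e * W $$ (k,0)" if "k < n" for k
  proof -
    have "(A * W) $$ (k,0) = (\<Sum>l<n. A $$ (k,l) * W $$ (l,0))"
      using A Wc that i by (intro mult_index_sum) auto
    also have "\<dots> = s * (A *\<^sub>v v) $ k"
      using A v that by (simp add: W0 sum_distrib_left mult_ac scalar_prod_def lessThan_atLeast0)
    finally show ?thesis using Av v that W0 by simp
  qed
  have "(adj W * (A * W)) $$ (i,0) = (\<Sum>k<n. cnj (W $$ (k,i)) * (A * W) $$ (k,0))"
    using A Wc i by (intro adj_mult_index) auto
  also have "\<dots> = e * (adj W * W) $$ (i,0)"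
    using i by (simp add: AW0 adj_mult_index[OF Wc Wc] sum_distrib_left mult_ac del: index_mult_mat(1))
  finally show ?thesis using W i by (simp add: unitary_adj_mult_self)
qed

lemma normal_unitary_deflation:
  assumes A: "A \<in> carrier_mat (Suc m) (Suc m)" and normal: "A * adj A = adj A * A"
  obtains W e A' where "unitary_mat (Suc m) W" "A' \<in> carrier_mat m m" "adj W * (A * W) = diag_block e A'"
proof -
  obtain e where "eigenvalue A e" using spectrum_non_empty[OF A] unfolding spectrum_def by auto
  then obtain v where "eigenvector A v e" unfolding eigenvalue_def by blast
  then have v: "v \<in> carrier_vec (Suc m)" "v \<noteq> 0\<^sub>v (Suc m)" and Av: "A *\<^sub>v v = e \<cdot>\<^sub>v v"
    using A unfolding eigenvector_def by auto
  obtain W s where W: "unitary_mat (Suc m) W" and W0: "\<And>i. i < Suc m \<Longrightarrow> W $$ (i,0) = s * v $ i"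
    using unitary_with_first_col[OF v] by blast
  have Wc: "W \<in> carrier_mat (Suc m) (Suc m)" using W by (rule unitary_carrier)
  define C where "C = adj W * (A * W)"
  have C: "C \<in> carrier_mat (Suc m) (Suc m)" unfolding C_def using A Wc by auto
  have col: "\<And>i. i < Suc m \<Longrightarrow> C $$ (i,0) = (if i = 0 then e else 0)"
    unfolding C_def by (rule unitary_conj_eigenvector_first_col[OF A v(1) Av W W0])
  have "C * adj C = adj C * C" unfolding C_def by (rule normal_unitary_conj[OF A normal W])
  then have "C = diag_block e (mat m m (\<lambda>(i,j). C $$ (Suc i, Suc j)))"
    using C col normal_first_col_imp_first_row[OF C] by (intro diag_block_of_first_col_row) auto
  with W show thesis unfolding C_def by (intro that) auto
qed

theorem normal_unitarily_diagonalizable: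
  assumes "A \<in> carrier_mat n n" "A * adj A = adj A * A"
  shows "\<exists>U d. unitary_mat n U \<and> A = U * diag_matrix n d * adj U"
  using assms
proof (induction n arbitrary: A)
  case 0
  then show ?case
    by (intro exI[of _ "1\<^sub>m 0"] exI[of _ "\<lambda>_. 0"]) (auto simp: unitary_mat_def intro!: eq_matI)
next
  case (Suc m)
  have A: "A \<in> carrier_mat (Suc m) (Suc m)" by fact
  obtain W e A' where W: "unitary_mat (Suc m) W" and A': "A' \<in> carrier_mat m m"
    and C_eq: "adj W * (A * W) = diag_block e A'"
    using normal_unitary_deflation[OF A Suc.prems(2)] by blast
  have Wc: "W \<in> carrier_mat (Suc m) (Suc m)" using W by (rule unitary_carrier)
  have "diag_block (e * cnj e) (A' * adj A') = diag_block (cnj e * e) (adj A' * A')"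
    using normal_unitary_conj[OF A Suc.prems(2) W] A'
    by (simp add: C_eq adj_diag_block diag_block_mult[of _ m m _ m])
  then have "A' * adj A' = adj A' * A'" by (rule diag_block_inject)
  then obtain U' d where U': "unitary_mat m U'" and A'_eq: "A' = U' * diag_matrix m d * adj U'"
    using Suc.IH[OF A'] by blast
  have U'c: "U' \<in> carrier_mat m m" using U' by (rule unitary_carrier)
  define d' where "d' = (\<lambda>i. if i = 0 then e else d (i - 1))"
  have "diag_matrix (Suc m) d' = diag_block e (diag_matrix m d)"
    by (simp add: diag_block_diag_matrix d'_def)
  then have C_diag: "adj W * (A * W) = diag_block 1 U' * diag_matrix (Suc m) d' * adj (diag_block 1 U')"
    using U'c by (simp add: C_eq A'_eq adj_diag_block diag_block_mult[of _ m m _ m])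
  have "A = W * (adj W * (A * W)) * adj W"
    using A Wc W unitary_cancel_left'[OF W, of "A * W" "Suc m"]
    by (simp add: assoc_mult_mat[of _ "Suc m" "Suc m" _ "Suc m" _ "Suc m"] unitary_mult_adj_self)
  then have "A = (W * diag_block 1 U') * diag_matrix (Suc m) d' * adj (W * diag_block 1 U')"
    unfolding C_diag using Wc U'c
    by (simp add: adj_mult[OF Wc diag_block_carrier[OF U'c]] diag_block_carrier
        assoc_mult_mat[of _ "Suc m" "Suc m" _ "Suc m" _ "Suc m"] mult_carrier_mat[of _ "Suc m" "Suc m" _ "Suc m"])
  then show ?case using unitary_mult[OF W unitary_diag_block[OF U']] by blast
qed

section \<open>Hadamard's inequality with its equality case\<close>

lemma exp_gt_add_one_self:
  fixes x :: real
  assumes "x \<noteq> 0"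
  shows "1 + x < exp x"
proof (cases "1 + x / 2 \<ge> 0")
  case True
  have "(1 + x / 2)\<^sup>2 \<le> (exp (x / 2))\<^sup>2"
    using True exp_ge_add_one_self[of "x / 2"] by (intro power_mono) auto
  also have "(exp (x / 2))\<^sup>2 = exp x" by (simp add: power2_eq_square flip: exp_add)
  finally have "(1 + x / 2)\<^sup>2 \<le> exp x" .
  moreover have "1 + x < (1 + x / 2)\<^sup>2"
    using assms by (cases "x > 0") (auto simp: power2_eq_square field_simps zero_less_mult_iff)
  ultimately show ?thesis by simp
next
  case False
  then show ?thesis using exp_gt_zero[of x] by linarith
qed

lemma am_gm_fixed_sum:
  fixes mu :: "nat \<Rightarrow> real"
  assumes nonneg: "\<And>k. k < N \<Longrightarrow> mu k \<ge> 0" and c: "c > 0" and sum: "(\<Sum>k<N. mu k) = real N * c"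
  shows "(\<Prod>k<N. mu k) \<le> c ^ N"
    and "(\<Prod>k<N. mu k) = c ^ N \<Longrightarrow> \<forall>k<N. mu k = c"
proof -
  \<comment> \<open>\<open>x \<le> exp (x - 1)\<close>, strictly unless \<open>x = 1\<close>, applied to \<open>x = mu k / c\<close>, whose exponents sum to 0\<close>
  define x where "x k = mu k / c" for k
  have x_nonneg: "x k \<ge> 0" if "k < N" for k unfolding x_def using nonneg[OF that] c by auto
  have x_le: "x k \<le> exp (x k - 1)" for k using exp_ge_add_one_self[of "x k - 1"] by simp
  have "(\<Sum>k<N. x k - 1) = 0"
    unfolding x_def sum_subtractf sum_divide_distrib[symmetric] sum using c by simp
  then have prod_exp: "(\<Prod>k<N. exp (x k - 1)) = 1" by (simp flip: exp_sum)
  have prod_mu: "(\<Prod>k<N. mu k) = c ^ N * (\<Prod>k<N. x k)" unfolding x_def prod_dividef using c by simp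
  have "(\<Prod>k<N. x k) \<le> 1"
    using prod_mono[of "{..<N}" x "\<lambda>k. exp (x k - 1)"] x_nonneg x_le prod_exp by auto
  then show "(\<Prod>k<N. mu k) \<le> c ^ N" unfolding prod_mu using c by (simp add: mult_left_le)
  assume "(\<Prod>k<N. mu k) = c ^ N"
  then have prod_x: "(\<Prod>k<N. x k) = 1" unfolding prod_mu using c by simp
  show "\<forall>k<N. mu k = c"
  proof (rule ccontr)
    assume "\<not> (\<forall>k<N. mu k = c)"
    then obtain j where j: "j < N" "mu j \<noteq> c" by auto
    then have "x j < exp (x j - 1)" unfolding x_def using c exp_gt_add_one_self[of "mu j / c - 1"] by simp
    have "(\<Prod>k<N. x k) = x j * (\<Prod>k\<in>{..<N}-{j}. x k)" using j by (simp add: prod.remove)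
    also have "\<dots> \<le> x j * (\<Prod>k\<in>{..<N}-{j}. exp (x k - 1))"
      using x_nonneg x_le j by (intro mult_left_mono prod_mono) auto
    also have "\<dots> < exp (x j - 1) * (\<Prod>k\<in>{..<N}-{j}. exp (x k - 1))"
      using \<open>x j < exp (x j - 1)\<close> by (intro mult_strict_right_mono prod_pos) auto
    also have "\<dots> = (\<Prod>k<N. exp (x k - 1))" using j by (simp add: prod.remove)
    finally show False using prod_x prod_exp by simp
  qed
qed

lemma trace_unitary_conj_diag:
  assumes U: "unitary_mat n U"
  shows "(\<Sum>i<n. (U * diag_matrix n d * adj U) $$ (i,i)) = (\<Sum>k<n. d k)"
proof -
  have Uc: "U \<in> carrier_mat n n" using U by (rule unitary_carrier)
  have "(\<Sum>i<n. (U * diag_matrix n d * adj U) $$ (i,i)) = (\<Sum>i<n. \<Sum>k<n. U $$ (i,k) * d k * cnj (U $$ (i,k)))"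
    using Uc by (intro sum.cong refl conj_diag_matrix_index) auto
  also have "\<dots> = (\<Sum>k<n. d k * (adj U * U) $$ (k,k))"
    by (subst sum.swap) (simp add: adj_mult_index[OF Uc Uc] sum_distrib_left mult_ac del: index_mult_mat(1))
  also have "\<dots> = (\<Sum>k<n. d k)" using U by (simp add: unitary_adj_mult_self)
  finally show ?thesis .
qed

lemma gram_matrix_diagonalization:
  assumes M: "M \<in> carrier_mat N N"
  obtains U and mu :: "nat \<Rightarrow> real"
  where "unitary_mat N U" "adj M * M = U * diag_matrix N (\<lambda>k. complex_of_real (mu k)) * adj U"
    "\<And>k. mu k \<ge> 0" "(cmod (det M))\<^sup>2 = (\<Prod>k<N. mu k)"
    "complex_of_real (\<Sum>k<N. mu k) = (\<Sum>i<N. (adj M * M) $$ (i,i))"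
proof -
  define G where "G = adj M * M"
  have Gc: "G \<in> carrier_mat N N" unfolding G_def using M by auto
  have "adj G = G" unfolding G_def using M by (simp add: adj_mult[of _ N N _ N])
  then obtain U d where U: "unitary_mat N U" and G_eq: "G = U * diag_matrix N d * adj U"
    using normal_unitarily_diagonalizable[OF Gc] by auto
  have Uc: "U \<in> carrier_mat N N" using U by (rule unitary_carrier)
  define X where "X = M * U"
  have Xc: "X \<in> carrier_mat N N" unfolding X_def using M Uc by auto
  define mu where "mu k = (\<Sum>l<N. (cmod (X $$ (l,k)))\<^sup>2)" for k
  have mu_nonneg: "mu k \<ge> 0" for k unfolding mu_def by (intro sum_nonneg) auto
  have "adj X * X = adj U * G * U"
    unfolding G_def X_def using M Uc
    by (simp add: adj_mult[OF M Uc] assoc_mult_mat[of _ N N _ N _ N] mult_carrier_mat[of _ N N _ N])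
  also have "\<dots> = diag_matrix N d" unfolding G_eq using U by (simp add: unitary_conj_cancel)
  finally have XX: "adj X * X = diag_matrix N d" .
  have dk: "d k = complex_of_real (mu k)" if "k < N" for k
  proof -
    have "d k = (adj X * X) $$ (k,k)" using that by (simp add: XX)
    also have "\<dots> = (\<Sum>l<N. cnj (X $$ (l,k)) * X $$ (l,k))" by (rule adj_mult_index[OF Xc Xc that that])
    also have "\<dots> = complex_of_real (mu k)"
      unfolding mu_def of_real_sum by (intro sum.cong refl) (simp only: cnj_mult_self)
    finally show ?thesis .
  qed
  then have d: "diag_matrix N d = diag_matrix N (\<lambda>k. complex_of_real (mu k))"
    by (intro eq_matI) auto
  have "complex_of_real ((cmod (det M))\<^sup>2) = det G"
    unfolding G_def using M by (simp add: det_mult[of _ N] det_adj cnj_mult_self)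
  also have "\<dots> = det (diag_matrix N d) * (det (adj U) * det U)"
    unfolding G_eq using Uc by (simp add: det_mult[of _ N])
  also have "\<dots> = complex_of_real (\<Prod>k<N. mu k)"
    using unitary_det[OF U] by (simp add: d det_diag_matrix)
  finally have det: "(cmod (det M))\<^sup>2 = (\<Prod>k<N. mu k)" by (simp only: of_real_eq_iff)
  have "(\<Sum>i<N. G $$ (i,i)) = complex_of_real (\<Sum>k<N. mu k)"
    unfolding G_eq trace_unitary_conj_diag[OF U] using dk by (simp add: of_real_sum)
  then have "complex_of_real (\<Sum>k<N. mu k) = (\<Sum>i<N. (adj M * M) $$ (i,i))"
    unfolding G_def by simp
  with that[OF U G_eq[unfolded d G_def] mu_nonneg det] show ?thesis .
qed

theorem hadamard_inequality:
  assumes M: "M \<in> carrier_mat N N" and c: "c > 0"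
    and diag: "\<And>i. i < N \<Longrightarrow> (adj M * M) $$ (i,i) = complex_of_real c"
  shows "(cmod (det M))\<^sup>2 \<le> c ^ N"
    and "(cmod (det M))\<^sup>2 = c ^ N \<longleftrightarrow> adj M * M = diag_matrix N (\<lambda>_. complex_of_real c)"
proof -
  obtain U mu where U: "unitary_mat N U"
    and G: "adj M * M = U * diag_matrix N (\<lambda>k. complex_of_real (mu k)) * adj U"
    and mu: "\<And>k. mu k \<ge> 0" "(cmod (det M))\<^sup>2 = (\<Prod>k<N. mu k)"
    and sum: "complex_of_real (\<Sum>k<N. mu k) = (\<Sum>i<N. (adj M * M) $$ (i,i))"
    using gram_matrix_diagonalization[OF M] by blast
  have "complex_of_real (\<Sum>k<N. mu k) = (\<Sum>i<N. complex_of_real c)"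
    unfolding sum by (intro sum.cong refl diag) simp
  also have "\<dots> = complex_of_real (real N * c)" by simp
  finally have "(\<Sum>k<N. mu k) = real N * c" by (simp only: of_real_eq_iff)
  note am_gm = am_gm_fixed_sum[of N mu, OF mu(1) c this]
  show "(cmod (det M))\<^sup>2 \<le> c ^ N" unfolding mu(2) by (rule am_gm(1))
  show "(cmod (det M))\<^sup>2 = c ^ N \<longleftrightarrow> adj M * M = diag_matrix N (\<lambda>_. complex_of_real c)"
  proof
    assume "(cmod (det M))\<^sup>2 = c ^ N"
    then have "\<forall>k<N. mu k = c" using mu(2) by (intro am_gm(2)) simp
    then have "diag_matrix N (\<lambda>k. complex_of_real (mu k)) = diag_matrix N (\<lambda>_. complex_of_real c)"
      by (intro eq_matI) auto
    then show "adj M * M = diag_matrix N (\<lambda>_. complex_of_real c)"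
      unfolding G using unitary_conj_scalar[OF U] by simp
  next
    assume "adj M * M = diag_matrix N (\<lambda>_. complex_of_real c)"
    then have "det (adj M * M) = complex_of_real (c ^ N)" by (simp add: det_diag_matrix)
    moreover have "det (adj M * M) = complex_of_real ((cmod (det M))\<^sup>2)"
      using M by (simp add: det_mult[of _ N] det_adj cnj_mult_self)
    ultimately show "(cmod (det M))\<^sup>2 = c ^ N" by (simp only: of_real_eq_iff)
  qed
qed

section \<open>Distinct \<open>n\<close>-th roots of a common number\<close>

definition distinct_nth_roots :: "nat \<Rightarrow> (nat \<Rightarrow> complex) \<Rightarrow> bool" where
  "distinct_nth_roots n a \<longleftrightarrow> inj_on a {..<n} \<and> (\<forall>k<n. \<forall>l<n. a k ^ n = a l ^ n)"

lemma unit_cnj_mult_self: "cmod z = 1 \<Longrightarrow> cnj z * z = 1"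
  by (simp add: cnj_mult_self)

lemma unit_cnj_power_mult_self: "cmod z = 1 \<Longrightarrow> cnj z ^ m * z ^ m = 1"
  by (simp add: unit_cnj_mult_self flip: power_mult_distrib)

lemma unit_cnj_mult_eq_one_iff: "cmod x = 1 \<Longrightarrow> cnj x * y = 1 \<longleftrightarrow> y = x"
  by (metis mult.assoc mult.commute mult_1_right unit_cnj_mult_self)

lemma unit_cnj_mult_power_eq_one_iff: "cmod x = 1 \<Longrightarrow> (cnj x * y) ^ n = 1 \<longleftrightarrow> y ^ n = x ^ n"
  using unit_cnj_mult_eq_one_iff[of "x ^ n" "y ^ n"] by (simp add: power_mult_distrib norm_power)

lemma cis_power_ne_one:
  fixes d n :: nat
  assumes "0 < d" "d < n"
  shows "cis (2 * pi / real n) ^ d \<noteq> 1"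
proof
  assume "cis (2 * pi / n) ^ d = 1"
  then have "cis (real d * (2 * pi / n)) = 1" by (simp add: DeMoivre)
  then have "cos (real d * (2 * pi / n)) = 1" by (metis cis.sel(1) one_complex.sel(1))
  then obtain m :: int where "real d * (2 * pi / n) = real_of_int m * 2 * pi"
    using cos_one_2pi_int by blast
  then have "real d = real_of_int m * real n" using assms by (simp add: field_simps)
  then have dm: "int d = m * int n" by (metis of_int_eq_iff of_int_mult of_int_of_nat_eq)
  then have "0 < m * int n" using assms by simp
  then have "m \<ge> 1" using assms by (simp add: zero_less_mult_iff)
  then have "int n \<le> m * int n" using mult_right_mono[of 1 m "int n"] by simp
  then show False using dm assms by linarith
qed

lemma sum_powers_nth_roots:
  fixes a :: "nat \<Rightarrow> complex"
  assumes inj: "inj_on a {..<n}" and pow: "\<And>k. k < n \<Longrightarrow> a k ^ n = \<alpha>" and "\<alpha> \<noteq> 0"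
    and d: "0 < d" "d < n"
  shows "(\<Sum>k<n. a k ^ d) = 0"
proof -
  \<comment> \<open>the \<open>a k\<close> are all the \<open>n\<close>-th roots of \<open>\<alpha>\<close>; this set is invariant under rotation by \<open>w\<close>, and \<open>w\<^sup>d \<noteq> 1\<close>\<close>
  define Z where "Z = {z. z ^ n = \<alpha>}"
  have "card Z = n" unfolding Z_def using card_nth_roots \<open>\<alpha> \<noteq> 0\<close> d by simp
  then have Z: "finite Z" using d by (intro card_ge_0_finite) simp
  have "a ` {..<n} = Z"
    using inj pow \<open>card Z = n\<close> by (intro card_subset_eq Z) (auto simp: Z_def card_image)
  then have sum_Z: "(\<Sum>k<n. a k ^ d) = (\<Sum>z\<in>Z. z ^ d)" using sum.reindex[OF inj, of "\<lambda>z. z ^ d"] by simp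
  define w where "w = cis (2 * pi / real n)"
  have "w ^ n = 1" unfolding w_def using d by (simp add: DeMoivre)
  then have wZ: "(\<lambda>z. w * z) ` Z \<subseteq> Z" unfolding Z_def by (auto simp: power_mult_distrib)
  have winj: "inj_on (\<lambda>z. w * z) Z" by (auto simp: w_def intro: inj_onI)
  have "(\<lambda>z. w * z) ` Z = Z" using card_subset_eq[OF Z wZ] card_image[OF winj] by simp
  then have "(\<Sum>z\<in>Z. z ^ d) = (\<Sum>z\<in>Z. (w * z) ^ d)"
    using sum.reindex[OF winj, of "\<lambda>z. z ^ d"] by simp
  also have "\<dots> = w ^ d * (\<Sum>z\<in>Z. z ^ d)" by (simp add: power_mult_distrib sum_distrib_left)
  finally have "(1 - w ^ d) * (\<Sum>z\<in>Z. z ^ d) = 0" by (simp add: algebra_simps)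
  moreover have "w ^ d \<noteq> 1" unfolding w_def using d by (rule cis_power_ne_one)
  ultimately show ?thesis using sum_Z by simp
qed

lemma distinct_nth_roots_iff_geometric_orthogonal:
  assumes unit: "\<And>k. k < n \<Longrightarrow> cmod (a k) = 1"
  shows "distinct_nth_roots n a \<longleftrightarrow> (\<forall>k<n. \<forall>l<n. k \<noteq> l \<longrightarrow> (\<Sum>j<n. (cnj (a k) * a l) ^ j) = 0)"
proof -
  have "(\<Sum>j<n. (cnj (a k) * a l) ^ j) = 0 \<longleftrightarrow> a l \<noteq> a k \<and> a l ^ n = a k ^ n"
    if "k < n" "l < n" for k l
    using that unit[of k] by (simp add: sum_gp_strict unit_cnj_mult_eq_one_iff unit_cnj_mult_power_eq_one_iff)
  then show ?thesis unfolding distinct_nth_roots_def inj_on_def by (metis lessThan_iff)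
qed

lemma distinct_nth_roots_power_sums:
  assumes roots: "distinct_nth_roots n a" and unit: "\<And>k. k < n \<Longrightarrow> cmod (a k) = 1"
    and j: "j < n" "j' < n"
  shows "(\<Sum>k<n. cnj (a k) ^ j' * a k ^ j) = (if j = j' then of_nat n else 0)"
proof -
  have n: "0 < n" using j by simp
  have inj: "inj_on a {..<n}" and pow: "\<And>k. k < n \<Longrightarrow> a k ^ n = a 0 ^ n"
    using roots n unfolding distinct_nth_roots_def by blast+
  have "a 0 ^ n \<noteq> 0" using unit[OF n] by auto
  then have sum0: "(\<Sum>k<n. a k ^ d) = 0" if "0 < d" "d < n" for d
    using sum_powers_nth_roots[OF inj pow _ that] by blast
  consider "j = j'" | "j' < j" | "j < j'" by linarith
  then show ?thesis
  proof cases
    case 1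
    have "(\<Sum>k<n. cnj (a k) ^ j' * a k ^ j) = (\<Sum>k<n. 1)"
      using 1 unit_cnj_power_mult_self[OF unit] by (intro sum.cong refl) simp
    then show ?thesis using 1 by simp
  next
    case 2
    have shift: "cnj (a k) ^ j' * a k ^ j = a k ^ (j - j')" if "k < n" for k
    proof -
      have "a k ^ j = a k ^ j' * a k ^ (j - j')" using 2 by (simp flip: power_add)
      then show ?thesis using unit_cnj_power_mult_self[OF unit[OF that], of j']
        by (simp add: mult.assoc[symmetric])
    qed
    have "(\<Sum>k<n. cnj (a k) ^ j' * a k ^ j) = (\<Sum>k<n. a k ^ (j - j'))"
      using shift by (intro sum.cong refl) simp
    then show ?thesis using 2 j sum0[of "j - j'"] by simp
  next
    case 3
    have shift: "cnj (a k) ^ j' * a k ^ j = cnj (a k ^ (j' - j))" if "k < n" for k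
    proof -
      have "cnj (a k) ^ j' = cnj (a k) ^ (j' - j) * cnj (a k) ^ j" using 3 by (simp flip: power_add)
      then show ?thesis using unit_cnj_power_mult_self[OF unit[OF that], of j]
        by (simp add: mult.assoc)
    qed
    have "(\<Sum>k<n. cnj (a k) ^ j' * a k ^ j) = cnj (\<Sum>k<n. a k ^ (j' - j))"
      unfolding cnj_sum using shift by (intro sum.cong refl) simp
    then show ?thesis using 3 j sum0[of "j' - j"] by simp
  qed
qed

lemma vandermonde_weights:
  fixes a q :: "nat \<Rightarrow> complex"
  assumes n: "n > 0" and unit: "\<And>k. k < n \<Longrightarrow> cmod (a k) = 1"
    and H: "\<And>j j'. j < n \<Longrightarrow> j' < n \<Longrightarrow>
      (\<Sum>k<n. q k * cnj (a k) ^ j' * a k ^ j) = (if j = j' then 1 else 0)"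
  shows "\<And>k. k < n \<Longrightarrow> q k = 1 / of_nat n"
    and "distinct_nth_roots n a"
proof -
  \<comment> \<open>\<open>H\<close> says \<open>E diag(q) E\<^sup>* = 1\<close> for the Vandermonde matrix \<open>E = (a\<^sub>k\<^sup>j)\<close>, hence \<open>E\<^sup>* E diag(q) = 1\<close>\<close>
  define E where "E = mat n n (\<lambda>(j,k). a k ^ j)"
  have Ec: "E \<in> carrier_mat n n" unfolding E_def by auto
  have E: "E $$ (j,k) = a k ^ j" if "j < n" "k < n" for j k using that unfolding E_def by simp
  have ED: "(E * diag_matrix n q) $$ (j,k) = a k ^ j * q k" if "j < n" "k < n" for j k
    using mult_diag_matrix_index[OF Ec that] that by (simp add: E)
  have EDc: "E * diag_matrix n q \<in> carrier_mat n n" using Ec by auto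
  have "E * diag_matrix n q * adj E = 1\<^sub>m n"
  proof (rule eq_matI)
    fix j j' assume "j < dim_row (1\<^sub>m n)" "j' < dim_col (1\<^sub>m n)"
    then have jj: "j < n" "j' < n" by auto
    have "(E * diag_matrix n q * adj E) $$ (j,j') = (\<Sum>k<n. (E * diag_matrix n q) $$ (j,k) * cnj (E $$ (j',k)))"
      by (rule mult_adj_index[OF EDc Ec jj])
    also have "\<dots> = (\<Sum>k<n. q k * cnj (a k) ^ j' * a k ^ j)"
      using jj by (intro sum.cong refl) (simp add: ED E del: index_mult_mat(1))
    finally show "(E * diag_matrix n q * adj E) $$ (j,j') = 1\<^sub>m n $$ (j,j')" using H[OF jj] jj by simp
  qed (use Ec EDc in auto)
  then have inv: "adj E * (E * diag_matrix n q) = 1\<^sub>m n"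
    using mat_mult_left_right_inverse[OF EDc] Ec by auto
  have key: "(\<Sum>j<n. (cnj (a k) * a l) ^ j) * q l = (if k = l then 1 else 0)" if kl: "k < n" "l < n" for k l
  proof -
    have "(adj E * (E * diag_matrix n q)) $$ (k,l) = (\<Sum>j<n. cnj (E $$ (j,k)) * (E * diag_matrix n q) $$ (j,l))"
      by (rule adj_mult_index[OF Ec EDc kl])
    also have "\<dots> = (\<Sum>j<n. (cnj (a k) * a l) ^ j) * q l"
      unfolding sum_distrib_right using kl
      by (intro sum.cong refl) (simp add: ED E power_mult_distrib del: index_mult_mat(1))
    finally show ?thesis using inv kl by simp
  qed
  show q: "q k = 1 / of_nat n" if k: "k < n" for k
  proof -
    have "of_nat n * q k = 1" using key[OF k k] unit_cnj_mult_self[OF unit[OF k]] by simp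
    then show ?thesis using n by (simp add: field_simps)
  qed
  have "(\<Sum>j<n. (cnj (a k) * a l) ^ j) = 0" if "k < n" "l < n" "k \<noteq> l" for k l
    using key[OF that(1,2)] q[OF that(2)] that(3) n by simp
  then show "distinct_nth_roots n a"
    using distinct_nth_roots_iff_geometric_orthogonal[of n a] unit by blast
qed

lemma distinct_nth_roots_powers_independent:
  assumes roots: "distinct_nth_roots n a" and unit: "\<And>k. k < n \<Longrightarrow> cmod (a k) = 1"
    and zero: "\<And>j. j < n \<Longrightarrow> (\<Sum>k<n. c k * a k ^ j) = 0" and l: "l < n"
  shows "c l = 0"
proof -
  have orth: "\<forall>k<n. \<forall>l<n. k \<noteq> l \<longrightarrow> (\<Sum>j<n. (cnj (a k) * a l) ^ j) = 0"
    using roots distinct_nth_roots_iff_geometric_orthogonal[of n a, OF unit] by blast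
  have "0 = (\<Sum>j<n. cnj (a l) ^ j * (\<Sum>k<n. c k * a k ^ j))"
    using zero by (intro sum.neutral[symmetric]) simp
  also have "\<dots> = (\<Sum>j<n. \<Sum>k<n. c k * (cnj (a l) * a k) ^ j)"
    by (simp add: sum_distrib_left power_mult_distrib mult_ac)
  also have "\<dots> = (\<Sum>k<n. c k * (\<Sum>j<n. (cnj (a l) * a k) ^ j))"
    by (subst sum.swap) (simp add: sum_distrib_left)
  also have "\<dots> = (\<Sum>k<n. if k = l then c k * of_nat n else 0)"
    using l orth unit_cnj_mult_self[OF unit[OF l]] by (intro sum.cong refl) auto
  also have "\<dots> = c l * of_nat n" using l by simp
  finally show ?thesis using l by simp
qed

section \<open>The Gram condition\<close>

definition geometric_kernel :: "nat \<Rightarrow> (nat \<Rightarrow> complex) \<Rightarrow> nat \<Rightarrow> nat \<Rightarrow> complex" where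
  "geometric_kernel n b s t = (\<Sum>i<n. (cnj (b s) * b t) ^ i)"

text \<open>
  For \<open>A = U diag(a) U\<^sup>*\<close>, \<open>B = V diag(b) V\<^sup>*\<close> and \<open>W = U\<^sup>* V\<close>, this is the entrywise form of
  \<open>M(A,B)\<^sup>* M(A,B) = n I\<close> after conjugating each \<open>n \<times> n\<close> block \<open>(j', j)\<close> by \<open>V\<close>.
\<close>
definition gram_condition :: "nat \<Rightarrow> (nat \<Rightarrow> complex) \<Rightarrow> (nat \<Rightarrow> complex) \<Rightarrow> complex mat \<Rightarrow> bool" where
  "gram_condition n a b W \<longleftrightarrow> (\<forall>j<n. \<forall>j'<n. \<forall>s<n. \<forall>t<n.
     (\<Sum>k<n. cnj (W $$ (k,s)) * W $$ (k,t) * cnj (a k) ^ j' * a k ^ j) * geometric_kernel n b s t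
       = (if j = j' \<and> s = t then of_nat n else 0))"

definition unbiased_mat :: "nat \<Rightarrow> complex mat \<Rightarrow> bool" where
  "unbiased_mat n W \<longleftrightarrow> (\<forall>k<n. \<forall>s<n. (cmod (W $$ (k,s)))\<^sup>2 = 1 / real n)"

lemma geometric_kernel_diag: "cmod (b s) = 1 \<Longrightarrow> geometric_kernel n b s s = of_nat n"
  unfolding geometric_kernel_def by (simp add: unit_cnj_mult_self)

lemma geometric_kernel_off_diag:
  assumes "distinct_nth_roots n b" "\<And>k. k < n \<Longrightarrow> cmod (b k) = 1" "s < n" "t < n" "s \<noteq> t"
  shows "geometric_kernel n b s t = 0"
  using assms distinct_nth_roots_iff_geometric_orthogonal unfolding geometric_kernel_def by blast

lemma gram_conditionD:
  assumes n: "n > 0" and a: "\<And>k. k < n \<Longrightarrow> cmod (a k) = 1" and b: "\<And>k. k < n \<Longrightarrow> cmod (b k) = 1"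
    and gram: "gram_condition n a b W"
  shows "distinct_nth_roots n a \<and> distinct_nth_roots n b \<and> unbiased_mat n W"
proof -
  have Q_diag: "(\<Sum>k<n. complex_of_real ((cmod (W $$ (k,s)))\<^sup>2) * cnj (a k) ^ j' * a k ^ j)
      = (if j = j' then 1 else 0)" if "j < n" "j' < n" "s < n" for j j' s
  proof -
    have "(\<Sum>k<n. cnj (W $$ (k,s)) * W $$ (k,s) * cnj (a k) ^ j' * a k ^ j) * geometric_kernel n b s s
        = (if j = j' \<and> s = s then of_nat n else 0)"
      using gram that unfolding gram_condition_def by blast
    then have "(\<Sum>k<n. cnj (W $$ (k,s)) * W $$ (k,s) * cnj (a k) ^ j' * a k ^ j) * of_nat n
        = (if j = j' then of_nat n else 0)"
      using geometric_kernel_diag[of b s n, OF b[OF that(3)]] by simp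
    then show ?thesis using n by (auto simp: cnj_mult_self split: if_splits)
  qed
  have unbiased: "(cmod (W $$ (k,s)))\<^sup>2 = 1 / real n" if "k < n" "s < n" for k s
  proof -
    have "complex_of_real ((cmod (W $$ (k,s)))\<^sup>2) = 1 / of_nat n"
      using vandermonde_weights(1)[of n a, OF n a Q_diag that(1)] that(2) by blast
    then show ?thesis by (metis of_real_eq_iff of_real_divide of_real_1 of_real_of_nat_eq)
  qed
  have roots_a: "distinct_nth_roots n a"
    using vandermonde_weights(2)[of n a, OF n a Q_diag] n by blast
  have "geometric_kernel n b s t = 0" if st: "s < n" "t < n" "s \<noteq> t" for s t
  proof (rule ccontr)
    assume "geometric_kernel n b s t \<noteq> 0"
    then have "(\<Sum>k<n. (cnj (W $$ (k,s)) * W $$ (k,t)) * a k ^ j) = 0" if "j < n" for j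
      using gram that st n unfolding gram_condition_def by force
    then have "cnj (W $$ (0,s)) * W $$ (0,t) = 0"
      using n by (intro distinct_nth_roots_powers_independent[OF roots_a a,
            where c = "\<lambda>k. cnj (W $$ (k,s)) * W $$ (k,t)"]) auto
    then show False using unbiased[of 0 s] unbiased[of 0 t] st n by auto
  qed
  then have "distinct_nth_roots n b"
    using distinct_nth_roots_iff_geometric_orthogonal[of n b] b unfolding geometric_kernel_def by blast
  then show ?thesis using roots_a unbiased unfolding unbiased_mat_def by blast
qed

lemma gram_conditionI:
  assumes a: "\<And>k. k < n \<Longrightarrow> cmod (a k) = 1" and b: "\<And>k. k < n \<Longrightarrow> cmod (b k) = 1"
    and roots: "distinct_nth_roots n a" "distinct_nth_roots n b" and W: "unbiased_mat n W"
  shows "gram_condition n a b W"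
  unfolding gram_condition_def
proof (intro allI impI)
  fix j j' s t assume jst: "j < n" "j' < n" "s < n" "t < n"
  show "(\<Sum>k<n. cnj (W $$ (k,s)) * W $$ (k,t) * cnj (a k) ^ j' * a k ^ j) * geometric_kernel n b s t
      = (if j = j' \<and> s = t then of_nat n else 0)"
  proof (cases "s = t")
    case True
    have "(\<Sum>k<n. cnj (W $$ (k,s)) * W $$ (k,s) * cnj (a k) ^ j' * a k ^ j)
        = (\<Sum>k<n. cnj (a k) ^ j' * a k ^ j) / of_nat n"
      unfolding sum_divide_distrib using W jst
      by (intro sum.cong refl) (simp add: cnj_mult_self unbiased_mat_def)
    then show ?thesis
      using True jst geometric_kernel_diag[of b s n, OF b[OF jst(3)]] distinct_nth_roots_power_sums[OF roots(1) a jst(1,2)]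
      by auto
  qed (use geometric_kernel_off_diag[of n b, OF roots(2) b] jst in auto)
qed

theorem gram_condition_iff:
  assumes "n > 0" "\<And>k. k < n \<Longrightarrow> cmod (a k) = 1" "\<And>k. k < n \<Longrightarrow> cmod (b k) = 1"
  shows "gram_condition n a b W \<longleftrightarrow> distinct_nth_roots n a \<and> distinct_nth_roots n b \<and> unbiased_mat n W"
  using gram_conditionD[of n a b W] gram_conditionI[of n a b W] assms by blast

section \<open>The Gram matrix of \<open>M(A,B)\<close>\<close>

lemma block_index_less: "i < n \<Longrightarrow> l < n \<Longrightarrow> i * n + l < n * (n::nat)"
proof -
  assume "i < n" "l < n"
  then have "i * n + l < Suc i * n" by simp
  also have "\<dots> \<le> n * n" using \<open>i < n\<close> by (intro mult_right_mono) auto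
  finally show ?thesis .
qed

lemma sum_lessThan_square:
  fixes f :: "nat \<Rightarrow> 'a::comm_monoid_add"
  shows "(\<Sum>r<n * n. f r) = (\<Sum>i<n. \<Sum>l<n. f (i * n + l))"
proof -
  have "(\<Sum>r<n * n. f r) = (\<Sum>i<n. sum f {i * n..<i * n + n})" using sum.nat_group[of f n n] by simp
  also have "\<dots> = (\<Sum>i<n. \<Sum>l<n. f (i * n + l))"
  proof (rule sum.cong[OF refl])
    fix i
    have "sum f {i * n..<i * n + n} = (\<Sum>l = 0..<n. f (l + i * n))"
      using sum.shift_bounds_nat_ivl[of f 0 "i * n" n] by (simp add: add.commute)
    then show "sum f {i * n..<i * n + n} = (\<Sum>l<n. f (i * n + l))" by (simp add: lessThan_atLeast0 add.commute)
  qed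
  finally show ?thesis .
qed

lemma Mblock_carrier: "Mblock n A B \<in> carrier_mat (n * n) (n * n)"
  unfolding Mblock_def by auto

lemma Mblock_gram_index:
  assumes A: "A \<in> carrier_mat n n" and B: "B \<in> carrier_mat n n"
    and c: "c' < n * n" "c < n * n"
  shows "(adj (Mblock n A B) * Mblock n A B) $$ (c',c) =
    (\<Sum>i<n. (adj (A ^\<^sub>m (c' div n) * B ^\<^sub>m i) * (A ^\<^sub>m (c div n) * B ^\<^sub>m i)) $$ (c' mod n, c mod n))"
proof -
  let ?M = "Mblock n A B" and ?P = "\<lambda>j i. A ^\<^sub>m j * B ^\<^sub>m i"
  have n: "n > 0" using c by (cases n) auto
  have "(adj ?M * ?M) $$ (c',c) = (\<Sum>r<n * n. cnj (?M $$ (r,c')) * ?M $$ (r,c))"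
    by (rule adj_mult_index[OF Mblock_carrier Mblock_carrier c])
  also have "\<dots> = (\<Sum>i<n. \<Sum>l<n. cnj (?M $$ (i * n + l, c')) * ?M $$ (i * n + l, c))"
    by (rule sum_lessThan_square)
  also have "\<dots> = (\<Sum>i<n. \<Sum>l<n. cnj (?P (c' div n) i $$ (l, c' mod n)) * ?P (c div n) i $$ (l, c mod n))"
    using c by (intro sum.cong refl) (simp add: Mblock_def block_index_less)
  also have "\<dots> = (\<Sum>i<n. (adj (?P (c' div n) i) * ?P (c div n) i) $$ (c' mod n, c mod n))"
    using A B n by (intro sum.cong refl adj_mult_index[symmetric]) auto
  finally show ?thesis .
qed

lemma Mblock_gram_diag:
  assumes A: "unitary_mat n A" and B: "unitary_mat n B" and c: "c < n * n"
  shows "(adj (Mblock n A B) * Mblock n A B) $$ (c,c) = of_nat n"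
proof -
  have n: "n > 0" using c by (cases n) auto
  have "adj (A ^\<^sub>m (c div n) * B ^\<^sub>m i) * (A ^\<^sub>m (c div n) * B ^\<^sub>m i) = 1\<^sub>m n" for i
    by (intro unitary_adj_mult_self unitary_mult unitary_pow A B)
  then show ?thesis
    using n by (simp add: Mblock_gram_index[OF unitary_carrier[OF A] unitary_carrier[OF B] c c])
qed

lemma conj_index:
  assumes V: "V \<in> carrier_mat n n" and Z: "Z \<in> carrier_mat n n" and xy: "x < n" "y < n"
  shows "(V * Z * adj V) $$ (x,y) = (\<Sum>s<n. \<Sum>t<n. V $$ (x,s) * Z $$ (s,t) * cnj (V $$ (y,t)))"
proof -
  have "(V * Z * adj V) $$ (x,y) = (\<Sum>t<n. (V * Z) $$ (x,t) * cnj (V $$ (y,t)))"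
    using V Z xy by (intro mult_adj_index) auto
  also have "\<dots> = (\<Sum>t<n. \<Sum>s<n. V $$ (x,s) * Z $$ (s,t) * cnj (V $$ (y,t)))"
    using V Z xy by (intro sum.cong refl) (simp add: mult_index_sum[OF V Z] sum_distrib_right del: index_mult_mat(1))
  also have "\<dots> = (\<Sum>s<n. \<Sum>t<n. V $$ (x,s) * Z $$ (s,t) * cnj (V $$ (y,t)))" by (rule sum.swap)
  finally show ?thesis .
qed

lemma diag_sandwich_index:
  assumes W: "W \<in> carrier_mat n n" and st: "s < n" "t < n"
  shows "(diag_matrix n p * (adj W * (diag_matrix n q * (W * diag_matrix n r)))) $$ (s,t)
    = p s * r t * (\<Sum>k<n. cnj (W $$ (k,s)) * W $$ (k,t) * q k)"
proof -
  have "(adj W * (diag_matrix n q * (W * diag_matrix n r))) $$ (s,t)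
      = (\<Sum>k<n. cnj (W $$ (k,s)) * (diag_matrix n q * (W * diag_matrix n r)) $$ (k,t))"
    using W st by (intro adj_mult_index) auto
  also have "\<dots> = r t * (\<Sum>k<n. cnj (W $$ (k,s)) * W $$ (k,t) * q k)"
    unfolding sum_distrib_left using W st
    by (intro sum.cong refl) (simp add: diag_matrix_mult_index[of _ n n] mult_diag_matrix_index del: index_mult_mat(1))
  moreover have "(diag_matrix n p * (adj W * (diag_matrix n q * (W * diag_matrix n r)))) $$ (s,t)
      = p s * (adj W * (diag_matrix n q * (W * diag_matrix n r))) $$ (s,t)"
    using W st by (intro diag_matrix_mult_index) auto
  ultimately show ?thesis by simp
qed

lemma power_products_diagonalised:
  assumes U: "unitary_mat n U" and V: "unitary_mat n V"
    and A: "A = U * diag_matrix n a * adj U" and B: "B = V * diag_matrix n b * adj V"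
  shows "adj (A ^\<^sub>m j' * B ^\<^sub>m i) * (A ^\<^sub>m j * B ^\<^sub>m i) = V * (diag_matrix n (\<lambda>s. cnj (b s) ^ i) *
    (adj (adj U * V) * (diag_matrix n (\<lambda>k. cnj (a k) ^ j' * a k ^ j) *
      ((adj U * V) * diag_matrix n (\<lambda>s. b s ^ i))))) * adj V"
proof -
  have c: "U \<in> carrier_mat n n" "V \<in> carrier_mat n n" using U V by (auto simp: unitary_carrier)
  note assoc = assoc_mult_mat[of _ n n _ n _ n] mult_carrier_mat[of _ n n _ n] adj_mult[of _ n n _ n]
  have cancel: "\<And>X. X \<in> carrier_mat n n \<Longrightarrow> adj U * (U * X) = X" by (rule unitary_cancel_left[OF U])
  have diag: "\<And>d e X. X \<in> carrier_mat n n \<Longrightarrow> diag_matrix n d * (diag_matrix n e * X) = diag_matrix n (\<lambda>i. d i * e i) * X"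
    by (rule diag_matrix_mult_assoc)
  show ?thesis unfolding A B unitary_conj_power[OF U] unitary_conj_power[OF V]
    using c by (simp add: assoc cancel diag adj_diag_matrix)
qed

definition gram_block ::
    "nat \<Rightarrow> (nat \<Rightarrow> complex) \<Rightarrow> (nat \<Rightarrow> complex) \<Rightarrow> complex mat \<Rightarrow> nat \<Rightarrow> nat \<Rightarrow> complex mat" where
  "gram_block n a b W j' j = mat n n (\<lambda>(s,t).
     (\<Sum>k<n. cnj (W $$ (k,s)) * W $$ (k,t) * cnj (a k) ^ j' * a k ^ j) * geometric_kernel n b s t)"

lemma gram_block_carrier[simp]: "gram_block n a b W j' j \<in> carrier_mat n n"
  and gram_block_dims[simp]: "dim_row (gram_block n a b W j' j) = n" "dim_col (gram_block n a b W j' j) = n"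
  unfolding gram_block_def by simp_all

lemma Mblock_gram_diagonalised:
  assumes U: "unitary_mat n U" and V: "unitary_mat n V"
    and A: "A = U * diag_matrix n a * adj U" and B: "B = V * diag_matrix n b * adj V"
    and c: "c' < n * n" "c < n * n"
  shows "(adj (Mblock n A B) * Mblock n A B) $$ (c',c)
    = (V * gram_block n a b (adj U * V) (c' div n) (c div n) * adj V) $$ (c' mod n, c mod n)"
proof -
  have n: "n > 0" using c by (cases n) auto
  define W where "W = adj U * V"
  define j' j x y where "j' = c' div n" and "j = c div n" and "x = c' mod n" and "y = c mod n"
  have xy: "x < n" "y < n" unfolding x_def y_def using n by auto
  have Uc: "U \<in> carrier_mat n n" and Vc: "V \<in> carrier_mat n n"
    using U V by (auto simp: unitary_carrier)
  then have Wc: "W \<in> carrier_mat n n" unfolding W_def by (intro mult_carrier_mat adj_carrier)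
  define Z where "Z i = diag_matrix n (\<lambda>s. cnj (b s) ^ i) *
    (adj W * (diag_matrix n (\<lambda>k. cnj (a k) ^ j' * a k ^ j) * (W * diag_matrix n (\<lambda>s. b s ^ i))))" for i
  have Zc: "Z i \<in> carrier_mat n n" for i unfolding Z_def using Wc by auto
  have "A \<in> carrier_mat n n" "B \<in> carrier_mat n n" using A B Uc Vc by auto
  then have "(adj (Mblock n A B) * Mblock n A B) $$ (c',c)
      = (\<Sum>i<n. (adj (A ^\<^sub>m j' * B ^\<^sub>m i) * (A ^\<^sub>m j * B ^\<^sub>m i)) $$ (x,y))"
    unfolding j'_def j_def x_def y_def using c by (rule Mblock_gram_index)
  also have "\<dots> = (\<Sum>i<n. (V * Z i * adj V) $$ (x,y))"
    unfolding Z_def W_def power_products_diagonalised[OF U V A B] ..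
  also have "\<dots> = (\<Sum>i<n. \<Sum>s<n. \<Sum>t<n. V $$ (x,s) * Z i $$ (s,t) * cnj (V $$ (y,t)))"
    by (intro sum.cong refl conj_index[OF Vc Zc xy])
  also have "\<dots> = (\<Sum>s<n. \<Sum>t<n. \<Sum>i<n. V $$ (x,s) * Z i $$ (s,t) * cnj (V $$ (y,t)))"
    by (subst sum.swap) (intro sum.cong refl sum.swap)
  also have "\<dots> = (\<Sum>s<n. \<Sum>t<n. V $$ (x,s) * (\<Sum>i<n. Z i $$ (s,t)) * cnj (V $$ (y,t)))"
    by (simp add: sum_distrib_left sum_distrib_right)
  also have "\<dots> = (\<Sum>s<n. \<Sum>t<n. V $$ (x,s) * gram_block n a b W j' j $$ (s,t) * cnj (V $$ (y,t)))"
  proof (intro sum.cong refl)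
    fix s t assume "s \<in> {..<n}" "t \<in> {..<n}"
    then have st: "s < n" "t < n" by auto
    have "(\<Sum>i<n. Z i $$ (s,t)) = gram_block n a b W j' j $$ (s,t)"
      unfolding Z_def diag_sandwich_index[OF Wc st]
      using st by (simp add: gram_block_def geometric_kernel_def sum_distrib_right power_mult_distrib mult_ac)
    then show "V $$ (x,s) * (\<Sum>i<n. Z i $$ (s,t)) * cnj (V $$ (y,t))
        = V $$ (x,s) * gram_block n a b W j' j $$ (s,t) * cnj (V $$ (y,t))" by simp
  qed
  also have "\<dots> = (V * gram_block n a b W j' j * adj V) $$ (x,y)"
    by (rule conj_index[symmetric, OF Vc gram_block_carrier xy])
  finally show ?thesis unfolding W_def j'_def j_def x_def y_def .
qed

lemma block_matrix_eq_scalar_iff: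
  assumes G: "G \<in> carrier_mat (n * n) (n * n)" and F: "\<And>j' j. F j' j \<in> carrier_mat n n"
    and entries: "\<And>c' c. c' < n * n \<Longrightarrow> c < n * n \<Longrightarrow> G $$ (c',c) = F (c' div n) (c div n) $$ (c' mod n, c mod n)"
  shows "G = diag_matrix (n * n) (\<lambda>_. x) \<longleftrightarrow>
    (\<forall>j'<n. \<forall>j<n. F j' j = diag_matrix n (\<lambda>_. if j' = j then x else 0))"
proof
  assume G_eq: "G = diag_matrix (n * n) (\<lambda>_. x)"
  show "\<forall>j'<n. \<forall>j<n. F j' j = diag_matrix n (\<lambda>_. if j' = j then x else 0)"
  proof (intro allI impI eq_matI)
    fix j' j k' k assume j: "j' < n" "j < n" and "k' < dim_row (diag_matrix n (\<lambda>_. if j' = j then x else 0))"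
      "k < dim_col (diag_matrix n (\<lambda>_. if j' = j then x else 0))"
    then have k: "k' < n" "k < n" by auto
    have "(j' * n + k') div n = j'" "(j' * n + k') mod n = k'" "(j * n + k) div n = j" "(j * n + k) mod n = k"
      using k by auto
    then have idx: "j' * n + k' = j * n + k \<longleftrightarrow> j' = j \<and> k' = k" by metis
    have "F j' j $$ (k',k) = G $$ (j' * n + k', j * n + k)"
      using entries[OF block_index_less[OF j(1) k(1)] block_index_less[OF j(2) k(2)]] k by simp
    then show "F j' j $$ (k',k) = diag_matrix n (\<lambda>_. if j' = j then x else 0) $$ (k',k)"
      using j k idx by (simp add: G_eq block_index_less)
  qed (use F in auto)
next
  assume blocks: "\<forall>j'<n. \<forall>j<n. F j' j = diag_matrix n (\<lambda>_. if j' = j then x else 0)"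
  show "G = diag_matrix (n * n) (\<lambda>_. x)"
  proof (rule eq_matI)
    fix c' c assume "c' < dim_row (diag_matrix (n * n) (\<lambda>_. x))" "c < dim_col (diag_matrix (n * n) (\<lambda>_. x))"
    then have c: "c' < n * n" "c < n * n" by auto
    then have "n > 0" by (cases n) auto
    with c have "c' div n < n" "c div n < n" "c' mod n < n" "c mod n < n"
      by (auto simp: less_mult_imp_div_less)
    moreover have "c' = c \<longleftrightarrow> c' div n = c div n \<and> c' mod n = c mod n"
      by (metis div_mult_mod_eq)
    ultimately show "G $$ (c',c) = diag_matrix (n * n) (\<lambda>_. x) $$ (c',c)"
      using entries[OF c] blocks c by auto
  qed (use G in auto)
qed

lemma unitary_conj_eq_scalar_iff:
  assumes V: "unitary_mat n V" and X: "X \<in> carrier_mat n n"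
  shows "V * X * adj V = diag_matrix n (\<lambda>_. x) \<longleftrightarrow> X = diag_matrix n (\<lambda>_. x)"
proof
  assume "V * X * adj V = diag_matrix n (\<lambda>_. x)"
  then have "adj V * (V * X * adj V) * V = adj V * diag_matrix n (\<lambda>_. x) * V" by simp
  then show "X = diag_matrix n (\<lambda>_. x)"
    using unitary_conj_cancel[OF V X] unitary_conj_scalar[OF unitary_adj[OF V]] by simp
qed (simp add: unitary_conj_scalar[OF V])

lemma gram_condition_iff_blocks:
  "gram_condition n a b W \<longleftrightarrow>
    (\<forall>j'<n. \<forall>j<n. gram_block n a b W j' j = diag_matrix n (\<lambda>_. if j' = j then of_nat n else 0))"
  unfolding gram_condition_def
proof (intro iffI allI impI eq_matI)
  fix j' j s t
  assume "\<forall>j<n. \<forall>j'<n. \<forall>s<n. \<forall>t<n. (\<Sum>k<n. cnj (W $$ (k,s)) * W $$ (k,t) * cnj (a k) ^ j' * a k ^ j)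
      * geometric_kernel n b s t = (if j = j' \<and> s = t then of_nat n else 0)"
    and "j' < n" "j < n" "s < dim_row (diag_matrix n (\<lambda>_. if j' = j then of_nat n else 0 :: complex))"
    "t < dim_col (diag_matrix n (\<lambda>_. if j' = j then of_nat n else 0 :: complex))"
  then show "gram_block n a b W j' j $$ (s,t) = diag_matrix n (\<lambda>_. if j' = j then of_nat n else 0) $$ (s,t)"
    by (auto simp: gram_block_def)
next
  fix j j' s t
  assume "\<forall>j'<n. \<forall>j<n. gram_block n a b W j' j = diag_matrix n (\<lambda>_. if j' = j then of_nat n else 0)"
    and jst: "j < n" "j' < n" "s < n" "t < n"
  then have "gram_block n a b W j' j $$ (s,t) = diag_matrix n (\<lambda>_. if j' = j then of_nat n else 0) $$ (s,t)"
    by simp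
  then show "(\<Sum>k<n. cnj (W $$ (k,s)) * W $$ (k,t) * cnj (a k) ^ j' * a k ^ j) * geometric_kernel n b s t
      = (if j = j' \<and> s = t then of_nat n else 0)"
    using jst by (auto simp: gram_block_def)
qed auto

theorem Mblock_gram_scalar_iff_gram_condition:
  assumes U: "unitary_mat n U" and V: "unitary_mat n V"
    and A: "A = U * diag_matrix n a * adj U" and B: "B = V * diag_matrix n b * adj V"
  shows "adj (Mblock n A B) * Mblock n A B = diag_matrix (n * n) (\<lambda>_. of_nat n)
    \<longleftrightarrow> gram_condition n a b (adj U * V)"
proof -
  have Vc: "V \<in> carrier_mat n n" using V by (rule unitary_carrier)
  have "adj (Mblock n A B) * Mblock n A B \<in> carrier_mat (n * n) (n * n)"
    by (rule mult_carrier_mat[OF adj_carrier[OF Mblock_carrier] Mblock_carrier])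
  then have "adj (Mblock n A B) * Mblock n A B = diag_matrix (n * n) (\<lambda>_. of_nat n) \<longleftrightarrow>
      (\<forall>j'<n. \<forall>j<n. V * gram_block n a b (adj U * V) j' j * adj V
        = diag_matrix n (\<lambda>_. if j' = j then of_nat n else 0))"
    using Vc by (intro block_matrix_eq_scalar_iff Mblock_gram_diagonalised[OF U V A B]) auto
  also have "\<dots> \<longleftrightarrow> gram_condition n a b (adj U * V)"
    unfolding gram_condition_iff_blocks by (simp add: unitary_conj_eq_scalar_iff[OF V])
  finally show ?thesis .
qed

section \<open>Orthonormal eigenbases\<close>

lemma cinner_col_col:
  assumes "U \<in> carrier_mat n n" "V \<in> carrier_mat n n" "s < n" "t < n"
  shows "cinner n (col U s) (col V t) = (adj U * V) $$ (s,t)"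
  unfolding cinner_def using assms by (simp add: adj_mult_index[OF assms] del: index_mult_mat(1))

lemma orthonormal_basis_cols_iff_unitary:
  assumes U: "U \<in> carrier_mat n n"
  shows "orthonormal_basis n (map (col U) [0..<n]) \<longleftrightarrow> unitary_mat n U"
proof -
  have "orthonormal_basis n (map (col U) [0..<n])
      \<longleftrightarrow> (\<forall>s<n. \<forall>t<n. (adj U * U) $$ (s,t) = (if s = t then 1 else 0))"
    unfolding orthonormal_basis_def using U by (simp add: cinner_col_col del: index_mult_mat(1))
  also have "\<dots> \<longleftrightarrow> adj U * U = 1\<^sub>m n"
    using U by (auto intro!: eq_matI simp del: index_mult_mat(1))
  finally show ?thesis using U unitary_matI unitary_adj_mult_self by blast
qed

lemma col_mult_diag_matrix:
  assumes "U \<in> carrier_mat r n" "k < n"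
  shows "col (U * diag_matrix n a) k = a k \<cdot>\<^sub>v col U k"
  using assms by (intro eq_vecI) (auto simp: mult_diag_matrix_index mult.commute simp del: index_mult_mat(1))

lemma conj_diag_iff_eigenvectors:
  assumes U: "unitary_mat n U" and A: "A \<in> carrier_mat n n"
  shows "A = U * diag_matrix n a * adj U \<longleftrightarrow> (\<forall>k<n. A *\<^sub>v col U k = a k \<cdot>\<^sub>v col U k)"
proof -
  have Uc: "U \<in> carrier_mat n n" using U by (rule unitary_carrier)
  have "A = U * diag_matrix n a * adj U \<longleftrightarrow> A * U = U * diag_matrix n a"
  proof
    assume "A = U * diag_matrix n a * adj U"
    then show "A * U = U * diag_matrix n a"
      using U Uc by (simp add: assoc_mult_mat[of _ n n _ n _ n] mult_carrier_mat[of _ n n _ n]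
          unitary_adj_mult_self)
  next
    assume "A * U = U * diag_matrix n a"
    then have "A * U * adj U = U * diag_matrix n a * adj U" by simp
    then show "A = U * diag_matrix n a * adj U"
      using A Uc U by (simp add: assoc_mult_mat[of _ n n _ n _ n] unitary_mult_adj_self)
  qed
  also have "\<dots> \<longleftrightarrow> (\<forall>k<n. A *\<^sub>v col U k = a k \<cdot>\<^sub>v col U k)"
  proof
    assume "A * U = U * diag_matrix n a"
    moreover have "A *\<^sub>v col U k = col (A * U) k" if "k < n" for k using col_mult2[OF A Uc that] by simp
    ultimately show "\<forall>k<n. A *\<^sub>v col U k = a k \<cdot>\<^sub>v col U k"
      using Uc by (simp add: col_mult_diag_matrix)
  next
    assume ev: "\<forall>k<n. A *\<^sub>v col U k = a k \<cdot>\<^sub>v col U k"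
    show "A * U = U * diag_matrix n a"
    proof (rule mat_col_eqI)
      fix k assume "k < dim_col (U * diag_matrix n a)"
      then have k: "k < n" by simp
      have "col (A * U) k = A *\<^sub>v col U k" by (rule col_mult2[OF A Uc k])
      also have "\<dots> = col (U * diag_matrix n a) k" using ev k col_mult_diag_matrix[OF Uc k] by simp
      finally show "col (A * U) k = col (U * diag_matrix n a) k" .
    qed (use A Uc in auto)
  qed
  finally show ?thesis .
qed

lemma orthonormal_eigenbasis_cols:
  assumes U: "unitary_mat n U" and A: "A = U * diag_matrix n a * adj U"
  shows "orthonormal_eigenbasis n A (map (col U) [0..<n])"
proof -
  have Uc: "U \<in> carrier_mat n n" using U by (rule unitary_carrier)
  have Ac: "A \<in> carrier_mat n n" using A Uc by (metis adj_carrier diag_matrix_carrier mult_carrier_mat)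
  have ob: "orthonormal_basis n (map (col U) [0..<n])"
    using orthonormal_basis_cols_iff_unitary[OF Uc] U by blast
  have "col U k \<noteq> 0\<^sub>v n" if "k < n" for k
  proof
    assume "col U k = 0\<^sub>v n"
    then have "cinner n (col U k) (col U k) = 0" unfolding cinner_def by simp
    then show False using ob that unfolding orthonormal_basis_def by auto
  qed
  then have "eigenvector A (col U k) (a k)" if "k < n" for k
    using that A Ac Uc conj_diag_iff_eigenvectors[OF U Ac] unfolding eigenvector_def by auto
  then show ?thesis unfolding orthonormal_eigenbasis_def using ob by auto
qed

lemma orthonormal_eigenbasis_diagonalizes:
  assumes ob: "orthonormal_eigenbasis n A us" and A: "A \<in> carrier_mat n n"
  obtains U a where "unitary_mat n U" "A = U * diag_matrix n a * adj U" "us = map (col U) [0..<n]"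
proof -
  define U where "U = mat_of_cols n us"
  have len: "length us = n" and us: "\<And>s. s < n \<Longrightarrow> us ! s \<in> carrier_vec n"
    and ev: "\<And>s. s < n \<Longrightarrow> \<exists>e. eigenvector A (us ! s) e"
    using ob unfolding orthonormal_eigenbasis_def orthonormal_basis_def by auto
  have Uc: "U \<in> carrier_mat n n" unfolding U_def using len mat_of_cols_carrier(1)[of n us] by simp
  have cols: "map (col U) [0..<n] = us"
    using len us by (intro nth_equalityI) (auto simp: U_def)
  have U: "unitary_mat n U"
    using ob cols orthonormal_basis_cols_iff_unitary[OF Uc] unfolding orthonormal_eigenbasis_def by simp
  define a where "a k = (SOME e. eigenvector A (us ! k) e)" for k
  have "eigenvector A (us ! k) (a k)" if "k < n" for k unfolding a_def using ev[OF that] by (rule someI_ex)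
  moreover have "col U k = us ! k" if "k < n" for k
    using arg_cong[OF cols, of "\<lambda>xs. xs ! k"] that by simp
  ultimately have "A = U * diag_matrix n a * adj U"
    unfolding conj_diag_iff_eigenvectors[OF U A] eigenvector_def by simp
  with U cols show ?thesis using that by blast
qed

lemma mutually_unbiased_cols_iff:
  assumes U: "unitary_mat n U" and V: "unitary_mat n V"
  shows "mutually_unbiased n (map (col U) [0..<n]) (map (col V) [0..<n]) \<longleftrightarrow> unbiased_mat n (adj U * V)"
  using orthonormal_basis_cols_iff_unitary[OF unitary_carrier[OF U]] U
    orthonormal_basis_cols_iff_unitary[OF unitary_carrier[OF V]] V
  unfolding mutually_unbiased_def unbiased_mat_def
  by (simp add: cinner_col_col[OF unitary_carrier[OF U] unitary_carrier[OF V]])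

section \<open>Spectral conditions\<close>

lemma unitary_conj_diag_unit:
  assumes A: "unitary_mat n A" and U: "unitary_mat n U" and A_eq: "A = U * diag_matrix n a * adj U"
    and k: "k < n"
  shows "cmod (a k) = 1"
proof -
  have Uc: "U \<in> carrier_mat n n" using U by (rule unitary_carrier)
  have cancel: "\<And>X. X \<in> carrier_mat n n \<Longrightarrow> adj U * (U * X) = X" by (rule unitary_cancel_left[OF U])
  have diag: "\<And>d e X. X \<in> carrier_mat n n \<Longrightarrow> diag_matrix n d * (diag_matrix n e * X) = diag_matrix n (\<lambda>i. d i * e i) * X"
    by (rule diag_matrix_mult_assoc)
  have "U * diag_matrix n (\<lambda>k. cnj (a k) * a k) * adj U = adj A * A"
    unfolding A_eq adj_unitary_conj[OF Uc] using Uc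
    by (simp add: assoc_mult_mat[of _ n n _ n _ n] mult_carrier_mat[of _ n n _ n] cancel diag)
  also have "\<dots> = diag_matrix n (\<lambda>_. 1)" using A by (simp add: unitary_adj_mult_self diag_matrix_one)
  finally have "cnj (a k) * a k = 1"
    using k by (simp add: unitary_conj_eq_scalar_iff[OF U] diag_matrix_eq_iff)
  then have "complex_of_real ((cmod (a k))\<^sup>2) = 1" by (simp only: cnj_mult_self)
  then have "(cmod (a k))\<^sup>2 = 1" by (simp only: of_real_eq_1_iff)
  then show ?thesis using norm_ge_zero[of "a k"] by (auto simp: power2_eq_1_iff)
qed

lemma simple_spectrum_conj_diag_iff:
  assumes U: "unitary_mat n U" and A: "A = U * diag_matrix n a * adj U"
  shows "simple_spectrum A \<longleftrightarrow> inj_on a {..<n}"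
proof -
  have Uc: "U \<in> carrier_mat n n" using U by (rule unitary_carrier)
  have "similar_mat A (diag_matrix n a)"
    using Uc A U by (intro similar_matI[where P = U and Q = "adj U"]) (auto simp: unitary_mat_def)
  then have "char_poly A = char_poly (diag_matrix n a)" by (rule char_poly_similar)
  also have "\<dots> = (\<Prod>x\<leftarrow>diag_mat (diag_matrix n a). [:- x, 1:])"
    by (rule char_poly_upper_triangular[of _ n]) (auto simp: upper_triangular_def)
  also have "diag_mat (diag_matrix n a) = map a [0..<n]" by (auto simp: diag_mat_def intro!: nth_equalityI)
  finally have cp: "char_poly A = prod_list (map (\<lambda>k. [:- a k, 1:]) [0..<n])" by (simp add: o_def)
  have order: "order e (char_poly A) = card {k\<in>{..<n}. a k = e}" for e
  proof -
    have "order e (char_poly A) = sum_list (map (order e) (map (\<lambda>k. [:- a k, 1:]) [0..<n]))"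
      unfolding cp by (rule order_prod_list) auto
    also have "\<dots> = (\<Sum>k<n. if a k = e then 1 else 0)"
      by (simp add: o_def order_linear' sum_list_distinct_conv_sum_set atLeast0LessThan)
    also have "\<dots> = card {k\<in>{..<n}. a k = e}"
      by (simp add: sum.If_cases, intro arg_cong[where f = card]) auto
    finally show ?thesis .
  qed
  show ?thesis unfolding simple_spectrum_def order inj_on_def
  proof (intro iffI ballI impI allI)
    fix x y assume card: "\<forall>e. card {k\<in>{..<n}. a k = e} \<le> 1"
      and xy: "x \<in> {..<n}" "y \<in> {..<n}" "a x = a y"
    have "card {x, y} \<le> card {k\<in>{..<n}. a k = a x}" using xy by (intro card_mono) auto
    then show "x = y" using card[rule_format, of "a x"] by (cases "x = y") auto
  next
    fix e assume "\<forall>x\<in>{..<n}. \<forall>y\<in>{..<n}. a x = a y \<longrightarrow> x = y"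
    then show "card {k\<in>{..<n}. a k = e} \<le> 1"
      unfolding One_nat_def by (subst card_le_Suc0_iff_eq) auto
  qed
qed

lemma scalar_power_conj_diag_iff:
  assumes n: "n > 0" and U: "unitary_mat n U" and A: "A = U * diag_matrix n a * adj U"
  shows "scalar_mat n (A ^\<^sub>m n) \<longleftrightarrow> (\<forall>k<n. \<forall>l<n. a k ^ n = a l ^ n)"
proof -
  have "scalar_mat n (A ^\<^sub>m n) \<longleftrightarrow> (\<exists>c. \<forall>k<n. a k ^ n = c)"
    unfolding scalar_mat_def A unitary_conj_power[OF U] diag_matrix_const[symmetric]
    by (simp add: unitary_conj_eq_scalar_iff[OF U] diag_matrix_eq_iff)
  also have "\<dots> \<longleftrightarrow> (\<forall>k<n. \<forall>l<n. a k ^ n = a l ^ n)"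
    using n by auto
  finally show ?thesis .
qed

lemma spectral_conditions_iff_distinct_nth_roots:
  assumes "n > 0" "unitary_mat n U" "A = U * diag_matrix n a * adj U"
  shows "simple_spectrum A \<and> scalar_mat n (A ^\<^sub>m n) \<longleftrightarrow> distinct_nth_roots n a"
  unfolding distinct_nth_roots_def
  using simple_spectrum_conj_diag_iff[OF assms(2,3)] scalar_power_conj_diag_iff[OF assms] by simp

section \<open>The equality case\<close>

lemma Mblock_gram_scalar_iff_diagonalised:
  assumes n: "n > 0" and A: "unitary_mat n A" and B: "unitary_mat n B"
    and U: "unitary_mat n U" and V: "unitary_mat n V"
    and A_eq: "A = U * diag_matrix n a * adj U" and B_eq: "B = V * diag_matrix n b * adj V"
  shows "adj (Mblock n A B) * Mblock n A B = diag_matrix (n * n) (\<lambda>_. of_nat n) \<longleftrightarrow>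
    (simple_spectrum A \<and> scalar_mat n (A ^\<^sub>m n)) \<and> (simple_spectrum B \<and> scalar_mat n (B ^\<^sub>m n))
      \<and> unbiased_mat n (adj U * V)"
  using Mblock_gram_scalar_iff_gram_condition[OF U V A_eq B_eq]
    gram_condition_iff[OF n unitary_conj_diag_unit[OF A U A_eq] unitary_conj_diag_unit[OF B V B_eq]]
    spectral_conditions_iff_distinct_nth_roots[OF n U A_eq]
    spectral_conditions_iff_distinct_nth_roots[OF n V B_eq]
  by simp

theorem Mblock_gram_scalar_iff:
  assumes n: "n > 0" and A: "unitary_mat n A" and B: "unitary_mat n B"
  shows "adj (Mblock n A B) * Mblock n A B = diag_matrix (n * n) (\<lambda>_. of_nat n) \<longleftrightarrow>
    simple_spectrum A \<and> simple_spectrum B \<and> scalar_mat n (A ^\<^sub>m n) \<and> scalar_mat n (B ^\<^sub>m n) \<and>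
    (\<exists>us vs. orthonormal_eigenbasis n A us \<and> orthonormal_eigenbasis n B vs \<and> mutually_unbiased n us vs)"
    (is "?G \<longleftrightarrow> ?conditions")
proof
  assume G: ?G
  have Ac: "A \<in> carrier_mat n n" and Bc: "B \<in> carrier_mat n n" using A B by (auto simp: unitary_carrier)
  obtain U a where U: "unitary_mat n U" and A_eq: "A = U * diag_matrix n a * adj U"
    using normal_unitarily_diagonalizable[OF Ac] A by (auto simp: unitary_mat_def)
  obtain V b where V: "unitary_mat n V" and B_eq: "B = V * diag_matrix n b * adj V"
    using normal_unitarily_diagonalizable[OF Bc] B by (auto simp: unitary_mat_def)
  have spectral: "simple_spectrum A" "scalar_mat n (A ^\<^sub>m n)" "simple_spectrum B" "scalar_mat n (B ^\<^sub>m n)"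
    and "unbiased_mat n (adj U * V)"
    using G Mblock_gram_scalar_iff_diagonalised[OF n A B U V A_eq B_eq] by simp_all
  then have "mutually_unbiased n (map (col U) [0..<n]) (map (col V) [0..<n])"
    using mutually_unbiased_cols_iff[OF U V] by simp
  then show ?conditions
    using spectral orthonormal_eigenbasis_cols[OF U A_eq] orthonormal_eigenbasis_cols[OF V B_eq] by blast
next
  assume ?conditions
  then obtain us vs where us: "orthonormal_eigenbasis n A us" and vs: "orthonormal_eigenbasis n B vs"
    and mub: "mutually_unbiased n us vs" by blast
  obtain U a where U: "unitary_mat n U" "A = U * diag_matrix n a * adj U" "us = map (col U) [0..<n]"
    using orthonormal_eigenbasis_diagonalizes[OF us unitary_carrier[OF A]] .
  obtain V b where V: "unitary_mat n V" "B = V * diag_matrix n b * adj V" "vs = map (col V) [0..<n]"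
    using orthonormal_eigenbasis_diagonalizes[OF vs unitary_carrier[OF B]] .
  have "unbiased_mat n (adj U * V)"
    using mub mutually_unbiased_cols_iff[OF U(1) V(1)] unfolding U(3) V(3) by simp
  with \<open>?conditions\<close> show ?G
    by (subst Mblock_gram_scalar_iff_diagonalised[OF n A B U(1) V(1) U(2) V(2)]) blast
qed

lemma powr_half_square:
  assumes "x > 0"
  shows "(x powr (real m / 2))\<^sup>2 = x ^ m"
proof -
  have "(x powr (real m / 2))\<^sup>2 = x powr (real 2 * (real m / 2))" using assms by (subst powr_power) auto
  also have "\<dots> = x ^ m" using assms by (simp add: powr_realpow)
  finally show ?thesis .
qed

theorem mainTheorem8:
  fixes n :: nat and A B :: "complex mat"
  assumes "n \<ge> 1" and "unitary_mat n A" and "unitary_mat n B"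
  shows "cmod (Tdet n A B) \<le> real n powr (real (n^2) / 2)
    \<and> (cmod (Tdet n A B) = real n powr (real (n^2) / 2) \<longleftrightarrow>
        simple_spectrum A \<and> simple_spectrum B \<and>
        scalar_mat n (A ^\<^sub>m n) \<and> scalar_mat n (B ^\<^sub>m n) \<and>
        (\<exists>us vs. orthonormal_eigenbasis n A us \<and> orthonormal_eigenbasis n B vs \<and>
                  mutually_unbiased n us vs))"
proof -
  have n: "n > 0" and rn: "real n > 0" using assms(1) by auto
  let ?M = "Mblock n A B" and ?y = "real n powr (real (n^2) / 2)"
  have diag: "(adj ?M * ?M) $$ (i,i) = complex_of_real (real n)" if "i < n * n" for i
    using Mblock_gram_diag[OF assms(2,3) that] by simp
  note hadamard = hadamard_inequality[OF Mblock_carrier rn diag]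
  have y: "?y \<ge> 0" "?y\<^sup>2 = real n ^ (n * n)"
    using powr_half_square[OF rn, of "n^2"] by (simp_all only: power2_eq_square[of n]) simp
  have "cmod (Tdet n A B) \<le> ?y"
    unfolding Tdet_def by (rule power2_le_imp_le[OF _ y(1)]) (unfold y(2), rule hadamard(1))
  moreover have "cmod (Tdet n A B) = ?y \<longleftrightarrow> adj ?M * ?M = diag_matrix (n * n) (\<lambda>_. of_nat n)"
    unfolding Tdet_def power2_eq_iff_nonneg[OF norm_ge_zero y(1), symmetric] y(2)
    using hadamard(2) by simp
  ultimately show ?thesis using Mblock_gram_scalar_iff[OF n assms(2,3)] by blast
qed

end
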